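(* Let $R$ be an integral domain with $\operatorname{char}(R)\nmid n$, and let $A=R[\mathbb{Z}/n\mathbb{Z}]\cong R[\sigma]/(\sigma^n-1)$. Equip $HH^*(A;A)$ with the Batalin–Vilkovisky structure induced by the canonical Frobenius form of the group ring. Then, as a BV-algebra, $$HH^*(A;A)\cong R[x,z]/(x^n-1,\,nz),\qquad \Delta(a)=0\ \text{ for all } a\in HH^*(A;A),$$ where $x\in HH^0(A;A)$ is the class of $\sigma$ (degree $0$) and $z\in HH^2(A;A)$ (degree $2$) is the class represented by the normalized Hochschild $2$-cocycle $(\sigma^i,\sigma^k)\mapsto -\sigma^{i+k-n}$ if $i+k\ge n$ and $0$ otherwise ($0\le i,k\le n-1$).
   Context: $HH^*(A;A)=\operatorname{Ext}^*_{A\otimes A^{op}}(A,A)$ with the cup product. The canonical Frobenius form on $R[G]$ ($G$ finite) is the symmetric nondegenerate bilinear form $\langle g,h\rangle=1$ if $g=h^{-1}$ and $0$ otherwise (equivalently $\langle a,b\rangle=\varepsilon(ab)$ where $\varepsilon$ picks the coefficient of the identity). For a symmetric algebra $A$ with such a form, the BV operator (Tradler) is induced on normalized Hochschild cochains by $\Delta:\operatorname{Hom}(\bar A^{\otimes m+1},A)\to \operatorname{Hom}(\bar A^{\otimes m},A)$, $\Delta(f)(a_1,\dots,a_m)=\sum_{j}\sum_{i=0}^{m}(-1)^{im}\langle 1, f(a_i,\dots,a_m,e_j,a_1,\dots,a_{i-1})\rangle e_j^\vee$, where $\{e_j\}$ is an $R$-basis of $A$ and $\{e_j^\vee\}$ the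 dual basis with respect to the form; this is the dual of the Connes operator. A BV-algebra is a graded commutative algebra with a degree $-1$ operator $\Delta$, $\Delta^2=0$, whose deviation from being a derivation, $\{a,b\}=-(-1)^{|a|}(\Delta(ab)-\Delta(a)b-(-1)^{|a|}a\Delta(b))$, is a Gerstenhaber bracket. *)

theory Defs
  imports Main
begin

text \<open>An element of A is represented by its coefficient function on the basis
sigma^0, ..., sigma^(n-1): a function nat => R vanishing at indices >= n.\<close>

definition gring :: "nat \<Rightarrow> (nat \<Rightarrow> 'r::comm_ring_1) set" where
  "gring n = {g. \<forall>k\<ge>n. g k = 0}"

definition sig :: "nat \<Rightarrow> nat \<Rightarrow> nat \<Rightarrow> 'r::comm_ring_1" where
  "sig n i = (\<lambda>k. if k = i mod n then 1 else 0)"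

definition gmult :: "nat \<Rightarrow> (nat \<Rightarrow> 'r::comm_ring_1) \<Rightarrow> (nat \<Rightarrow> 'r) \<Rightarrow> nat \<Rightarrow> 'r" where
  "gmult n g h = (\<lambda>k. if k < n then
      (\<Sum>i<n. \<Sum>j<n. if (i + j) mod n = k then g i * h j else 0) else 0)"

text \<open>A normalized m-cochain f : (A/R1)^{\<otimes>m} -> A is R-multilinear, hence determined by
its values on basis tuples (sigma^(k_1), ..., sigma^(k_m)) with 1 <= k_j <= n-1
(normalization: f vanishes as soon as an argument is sigma^0 = 1).  We represent it by
f :: nat list => (nat => R), f ks = value on the tuple of basis elements with exponents ks,
with value 0 on lists that are not such tuples (in particular on lists containing 0).\<close>

definition valid_idx :: "nat \<Rightarrow> nat \<Rightarrow> nat list \<Rightarrow> bool" where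
  "valid_idx n m ks \<longleftrightarrow> length ks = m \<and> set ks \<subseteq> {1..<n}"

definition cochains :: "nat \<Rightarrow> nat \<Rightarrow> (nat list \<Rightarrow> nat \<Rightarrow> 'r::comm_ring_1) set" where
  "cochains n m = {f. (\<forall>ks. f ks \<in> gring n) \<and> (\<forall>ks. \<not> valid_idx n m ks \<longrightarrow> f ks = (\<lambda>_. 0))}"

definition gscale :: "'r::comm_ring_1 \<Rightarrow> (nat \<Rightarrow> 'r) \<Rightarrow> nat \<Rightarrow> 'r" where
  "gscale c g = (\<lambda>k. c * g k)"

text \<open>Hochschild differential d : C^m -> C^(m+1):
 (df)(a_1,...,a_(m+1)) = a_1 f(a_2,...,a_(m+1))
    + sum_(i=1)^m (-1)^i f(a_1,...,a_i a_(i+1),...,a_(m+1))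
    + (-1)^(m+1) f(a_1,...,a_m) a_(m+1).
 The product of basis elements sigma^a sigma^b is sigma^((a+b) mod n); if it equals
 sigma^0 the term vanishes by normalization (f is 0 on lists containing 0).\<close>
definition hdiff :: "nat \<Rightarrow> nat \<Rightarrow> (nat list \<Rightarrow> nat \<Rightarrow> 'r::comm_ring_1) \<Rightarrow> nat list \<Rightarrow> nat \<Rightarrow> 'r" where
  "hdiff n m f = (\<lambda>ks. if valid_idx n (Suc m) ks then
      (\<lambda>t. gmult n (sig n (hd ks)) (f (tl ks)) t
         + (\<Sum>i\<in>{1..m}. (-1) ^ i *
              f (take (i - 1) ks @ [(ks ! (i - 1) + ks ! i) mod n] @ drop (i + 1) ks) t)
         + (-1) ^ (Suc m) * gmult n (f (butlast ks)) (sig n (last ks)) t)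
    else (\<lambda>_. 0))"

definition cocycles :: "nat \<Rightarrow> nat \<Rightarrow> (nat list \<Rightarrow> nat \<Rightarrow> 'r::comm_ring_1) set" where
  "cocycles n m = {f \<in> cochains n m. hdiff n m f = (\<lambda>_ _. 0)}"

definition coboundaries :: "nat \<Rightarrow> nat \<Rightarrow> (nat list \<Rightarrow> nat \<Rightarrow> 'r::comm_ring_1) set" where
  "coboundaries n m = (if m = 0 then {(\<lambda>_ _. 0)}
      else {f. \<exists>g \<in> cochains n (m - 1). f = hdiff n (m - 1) g})"

definition cminus :: "(nat list \<Rightarrow> nat \<Rightarrow> 'r::comm_ring_1) \<Rightarrow> (nat list \<Rightarrow> nat \<Rightarrow> 'r) \<Rightarrow> nat list \<Rightarrow> nat \<Rightarrow> 'r" where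
  "cminus f g = (\<lambda>ks t. f ks t - g ks t)"

definition cup :: "nat \<Rightarrow> nat \<Rightarrow> nat \<Rightarrow> (nat list \<Rightarrow> nat \<Rightarrow> 'r::comm_ring_1) \<Rightarrow> (nat list \<Rightarrow> nat \<Rightarrow> 'r) \<Rightarrow> nat list \<Rightarrow> nat \<Rightarrow> 'r" where
  "cup n p q f g = (\<lambda>ks. if length ks = p + q
      then gmult n (f (take p ks)) (g (drop p ks)) else (\<lambda>_. 0))"

text \<open>Delta : C^(m+1) -> C^m,
 Delta(f)(a_1..a_m) = sum_j sum_(i=1)^(m+1) (-1)^(i m) <1, f(a_i..a_m, e_j, a_1..a_(i-1))> e_j^dual,
 with basis e_j = sigma^j (j < n), dual basis e_j^dual = sigma^(n-j) = sigma^(-j), and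
 <1, g> = eps(g) = coefficient of sigma^0 in g.\<close>
definition bv_delta :: "nat \<Rightarrow> nat \<Rightarrow> (nat list \<Rightarrow> nat \<Rightarrow> 'r::comm_ring_1) \<Rightarrow> nat list \<Rightarrow> nat \<Rightarrow> 'r" where
  "bv_delta n m f = (\<lambda>ks. if valid_idx n m ks then
      (\<lambda>t. \<Sum>j<n. \<Sum>i\<in>{1..Suc m}.
          (-1) ^ (i * m) * f (drop (i - 1) ks @ [j] @ take (i - 1) ks) 0 * sig n (n - j) t)
    else (\<lambda>_. 0))"

definition unit_cochain :: "nat \<Rightarrow> nat list \<Rightarrow> nat \<Rightarrow> 'r::comm_ring_1" where
  "unit_cochain n = (\<lambda>ks. if ks = [] then sig n 0 else (\<lambda>_. 0))"

definition x_cochain :: "nat \<Rightarrow> nat list \<Rightarrow> nat \<Rightarrow> 'r::comm_ring_1" where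
  "x_cochain n = (\<lambda>ks. if ks = [] then sig n 1 else (\<lambda>_. 0))"

definition z_cochain :: "nat \<Rightarrow> nat list \<Rightarrow> nat \<Rightarrow> 'r::comm_ring_1" where
  "z_cochain n = (\<lambda>ks. if valid_idx n 2 ks \<and> ks ! 0 + ks ! 1 \<ge> n
      then (\<lambda>t. - sig n (ks ! 0 + ks ! 1 - n) t) else (\<lambda>_. 0))"

primrec xpow :: "nat \<Rightarrow> nat \<Rightarrow> nat list \<Rightarrow> nat \<Rightarrow> 'r::comm_ring_1" where
  "xpow n 0 = unit_cochain n"
| "xpow n (Suc i) = cup n 0 0 (x_cochain n) (xpow n i)"

primrec zpow :: "nat \<Rightarrow> nat \<Rightarrow> nat list \<Rightarrow> nat \<Rightarrow> 'r::comm_ring_1" where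
  "zpow n 0 = unit_cochain n"
| "zpow n (Suc k) = cup n 2 (2 * k) (z_cochain n) (zpow n k)"

definition monom :: "nat \<Rightarrow> nat \<Rightarrow> nat \<Rightarrow> nat list \<Rightarrow> nat \<Rightarrow> 'r::comm_ring_1" where
  "monom n i k = cup n 0 (2 * k) (xpow n i) (zpow n k)"

definition lincomb :: "nat \<Rightarrow> nat \<Rightarrow> (nat \<Rightarrow> 'r::comm_ring_1) \<Rightarrow> nat list \<Rightarrow> nat \<Rightarrow> 'r" where
  "lincomb n k c = (\<lambda>ks t. \<Sum>i<n. c i * monom n i k ks t)"

end

theory Submission
  imports Defs
begin

text \<open>
  Since \<open>A = R[\<int>/n]\<close> is graded by \<open>\<int>/n\<close>, a Hochschild cochain splits into \<open>n\<close> coordinates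
  (the coefficient of \<open>\<sigma>^(t + k\<^sub>1 + \<dots> + k\<^sub>m)\<close> in \<open>f(\<sigma>^k\<^sub>1, \<dots>, \<sigma>^k\<^sub>m)\<close>), and the
  Hochschild differential acts on each of them as the differential of the normalized cochain
  complex of \<open>\<int>/n\<close> with trivial coefficients \<open>R\<close>. Hence \<open>HH\<^sup>*(A; A)\<close> is \<open>n\<close> copies of
  \<open>H\<^sup>*(\<int>/n; R)\<close>. The latter is 2-periodic: cup product with the carry cocycle
  \<open>u(a, b) = [a + b \<ge> n]\<close> is inverted by restricting a cocycle to the generator in its
  first argument. Degree-one cocycles are additive maps \<open>\<int>/n \<rightarrow> R\<close>, which vanish because
  \<open>n\<close> is a nonzero divisor; so every odd cocycle bounds and every even one is cohomologous to
  a multiple of \<open>u\<^sup>k\<close>. Evaluating on the cycle \<open>\<Sum> [x\<^sub>1|1|\<dots>|x\<^sub>k|1]\<close> shows that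
  \<open>c u\<^sup>k\<close> bounds only if \<open>n\<close> divides \<open>c\<close>. In coordinates \<open>x\<^sup>i z\<^sup>k\<close> becomes \<open>\<plusminus>u\<^sup>k\<close> in
  coordinate \<open>i\<close>, and Tradler's \<open>\<Delta>\<close> becomes Connes' cyclic norm operator, which
  anticommutes with the differential. Thus \<open>\<Delta>\<close> of a cocycle is a cocycle of odd degree, or
  the cocycle itself has odd degree and bounds; either way \<open>\<Delta>\<close> vanishes on cohomology.
\<close>

section \<open>Normalized cochains of the cyclic group\<close>

text \<open>A cochain of \<open>\<int>/n\<close> with trivial coefficients is a function on tuples of exponents,
  vanishing on tuples that contain \<open>0\<close>; \<open>cdiff\<close> is the bar differential, whose outer faces
  act trivially.\<close>

definition cyc_cochains :: "nat \<Rightarrow> nat \<Rightarrow> (nat list \<Rightarrow> 'r::comm_ring_1) set" where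
  "cyc_cochains n m = {\<psi>. \<forall>ks. \<not> valid_idx n m ks \<longrightarrow> \<psi> ks = 0}"

definition merge_at :: "nat \<Rightarrow> nat list \<Rightarrow> nat \<Rightarrow> nat list" where
  "merge_at n ks i = take (i - 1) ks @ [(ks ! (i - 1) + ks ! i) mod n] @ drop (i + 1) ks"

definition cdiff_expr :: "nat \<Rightarrow> nat \<Rightarrow> (nat list \<Rightarrow> 'r::comm_ring_1) \<Rightarrow> nat list \<Rightarrow> 'r" where
  "cdiff_expr n m \<psi> ks = \<psi> (tl ks) + (\<Sum>i\<in>{1..m}. (-1) ^ i * \<psi> (merge_at n ks i))
      + (-1) ^ (Suc m) * \<psi> (butlast ks)"

definition cdiff :: "nat \<Rightarrow> nat \<Rightarrow> (nat list \<Rightarrow> 'r::comm_ring_1) \<Rightarrow> nat list \<Rightarrow> 'r" where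
  "cdiff n m \<psi> ks = (if valid_idx n (Suc m) ks then cdiff_expr n m \<psi> ks else 0)"

lemma merge_at_Cons_1: "ys \<noteq> [] \<Longrightarrow> merge_at n (x # ys) (Suc 0) = ((x + hd ys) mod n) # tl ys"
  by (cases ys) (auto simp: merge_at_def)

lemma merge_at_Cons: "i \<ge> 1 \<Longrightarrow> merge_at n (x # ys) (Suc i) = x # merge_at n ys i"
  by (cases i) (auto simp: merge_at_def)

lemma cdiff_expr_Cons:
  assumes "length ys = Suc m"
  shows "cdiff_expr n (Suc m) \<psi> (x # ys) = \<psi> ys - \<psi> (((x + hd ys) mod n) # tl ys)
           - cdiff_expr n m (\<lambda>l. \<psi> (x # l)) ys + \<psi> (x # tl ys)"
proof -
  have ys: "ys \<noteq> []" using assms by auto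
  have s0: "(\<Sum>i\<in>{1..Suc m}. f i) = f 1 + (\<Sum>i\<in>{1..m}. f (Suc i))" for f :: "nat \<Rightarrow> 'a"
    by (subst sum.atLeast_Suc_atMost, simp, subst sum.shift_bounds_cl_Suc_ivl[symmetric], simp)
  have s: "(\<Sum>i\<in>{1..Suc m}. (-1) ^ i * \<psi> (merge_at n (x # ys) i))
      = - \<psi> (((x + hd ys) mod n) # tl ys) - (\<Sum>i\<in>{1..m}. (-1) ^ i * \<psi> (x # merge_at n ys i))"
    unfolding s0 using ys
    by (simp add: merge_at_Cons_1 merge_at_Cons sum_negf)
  have b: "butlast (x # ys) = x # butlast ys" using ys by simp
  show ?thesis unfolding cdiff_expr_def s b using ys by (simp add: algebra_simps)
qed

lemma cyc_cochainsD: "\<psi> \<in> cyc_cochains n m \<Longrightarrow> \<not> valid_idx n m ks \<Longrightarrow> \<psi> ks = 0"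
  by (simp add: cyc_cochains_def)

lemma cyc_cochainsI: "(\<And>ks. \<not> valid_idx n m ks \<Longrightarrow> \<psi> ks = 0) \<Longrightarrow> \<psi> \<in> cyc_cochains n m"
  by (simp add: cyc_cochains_def)

lemma cyc_cochains_zero_entry: "\<psi> \<in> cyc_cochains n m \<Longrightarrow> 0 \<in> set l \<Longrightarrow> \<psi> l = 0"
  by (erule cyc_cochainsD) (auto simp: valid_idx_def)

lemma cyc_cochains_Cons_slice: "\<psi> \<in> cyc_cochains n (Suc m) \<Longrightarrow> (\<lambda>l. \<psi> (x # l)) \<in> cyc_cochains n m"
  by (rule cyc_cochainsI, erule cyc_cochainsD) (auto simp: valid_idx_def)

lemma cdiff_expr_zero [simp]: "cdiff_expr n m (\<lambda>l. 0) ks = 0"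
  by (simp add: cdiff_expr_def)

lemma cdiff_zero [simp]: "cdiff n m (\<lambda>l. 0) ks = 0"
  by (simp add: cdiff_def)

lemma cdiff_expr_0: "length ks = Suc 0 \<Longrightarrow> cdiff_expr n 0 \<psi> ks = 0"
  by (cases ks) (auto simp: cdiff_expr_def)

lemma cdiff_deg0[simp]: "cdiff n 0 \<psi> ks = 0"
  by (auto simp: cdiff_def valid_idx_def cdiff_expr_0)

text \<open>The unrestricted formula already vanishes on tuples containing \<open>0\<close>: the terms cancel
  in pairs.\<close>

lemma cdiff_expr_eq_cdiff:
  assumes "\<psi> \<in> cyc_cochains n m" "length ks = Suc m" "set ks \<subseteq> {..<n}"
  shows "cdiff_expr n m \<psi> ks = cdiff n m \<psi> ks"
  using assms
proof (induction m arbitrary: \<psi> ks)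
  case 0
  then show ?case by (simp add: cdiff_expr_0)
next
  case (Suc m)
  then obtain x ys where ks: "ks = x # ys" and ly: "length ys = Suc m"
    by (cases ks) auto
  have xn: "x < n" and ysn: "set ys \<subseteq> {..<n}" using Suc.prems ks by auto
  show ?case
  proof (cases "valid_idx n (Suc (Suc m)) ks")
    case True
    then show ?thesis by (simp add: cdiff_def)
  next
    case False
    have IH: "cdiff_expr n m (\<lambda>l. \<psi> (x # l)) ys = cdiff n m (\<lambda>l. \<psi> (x # l)) ys"
      using Suc.IH[OF cyc_cochains_Cons_slice[OF Suc.prems(1)] ly ysn] .
    obtain y zs where ys: "ys = y # zs" using ly by (cases ys) auto
    have yn: "y < n" using ysn ys by auto
    have inv: "x = 0 \<or> y = 0 \<or> 0 \<in> set zs"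
      using False ks ys ly xn ysn by (auto simp: valid_idx_def subset_iff; metis One_nat_def Suc_leI gr0I)
    have "cdiff_expr n (Suc m) \<psi> ks = \<psi> ys - \<psi> (((x + hd ys) mod n) # tl ys)
           - cdiff n m (\<lambda>l. \<psi> (x # l)) ys + \<psi> (x # tl ys)"
      unfolding ks cdiff_expr_Cons[OF ly] IH ..
    also have "\<dots> = 0"
    proof -
      have z: "\<psi> l = 0" if "0 \<in> set l" for l
        using cyc_cochains_zero_entry[OF Suc.prems(1)] that by auto
      consider "x = 0" | "x \<noteq> 0" "y = 0" | "x \<noteq> 0" "y \<noteq> 0" "0 \<in> set zs" using inv by blast
      then show ?thesis
      proof cases
        case 1
        have "(\<lambda>l. \<psi> (x # l)) = (\<lambda>l. 0)" using z 1 by auto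
        then show ?thesis using 1 ys yn z by simp
      next
        case 2
        have "cdiff n m (\<lambda>l. \<psi> (x # l)) ys = 0" using 2 ys by (simp add: cdiff_def valid_idx_def)
        then show ?thesis using 2 ys xn z by simp
      next
        case 3
        have "cdiff n m (\<lambda>l. \<psi> (x # l)) ys = 0" using 3 ys by (auto simp: cdiff_def valid_idx_def)
        then show ?thesis using 3 ys z by simp
      qed
    qed
    finally show ?thesis using False by (simp add: cdiff_def)
  qed
qed

lemma cdiff_Cons:
  assumes "\<psi> \<in> cyc_cochains n (Suc m)" "x < n" "length ys = Suc m" "set ys \<subseteq> {..<n}"
  shows "cdiff n (Suc m) \<psi> (x # ys) = \<psi> ys - \<psi> (((x + hd ys) mod n) # tl ys)
           - cdiff n m (\<lambda>l. \<psi> (x # l)) ys + \<psi> (x # tl ys)"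
proof -
  have "cdiff n (Suc m) \<psi> (x # ys) = cdiff_expr n (Suc m) \<psi> (x # ys)"
    using cdiff_expr_eq_cdiff[OF assms(1)] assms by simp
  also have "\<dots> = \<psi> ys - \<psi> (((x + hd ys) mod n) # tl ys)
           - cdiff_expr n m (\<lambda>l. \<psi> (x # l)) ys + \<psi> (x # tl ys)"
    by (rule cdiff_expr_Cons[OF assms(3)])
  also have "cdiff_expr n m (\<lambda>l. \<psi> (x # l)) ys = cdiff n m (\<lambda>l. \<psi> (x # l)) ys"
    using cdiff_expr_eq_cdiff[OF cyc_cochains_Cons_slice[OF assms(1)] assms(3,4)] .
  finally show ?thesis .
qed

lemma cdiff_expr_diff: "cdiff_expr n m (\<lambda>l. f l - g l) ks = cdiff_expr n m f ks - cdiff_expr n m g ks"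
  by (simp add: cdiff_expr_def sum_subtractf algebra_simps)

lemma cdiff_expr_scale: "cdiff_expr n m (\<lambda>l. c * f l) ks = c * cdiff_expr n m f ks"
  by (simp add: cdiff_expr_def sum_distrib_left algebra_simps)

lemma cdiff_expr_sum: "cdiff_expr n m (\<lambda>l. \<Sum>x\<in>A. f x l) ks = (\<Sum>x\<in>A. cdiff_expr n m (f x) ks)"
  unfolding cdiff_expr_def sum_subtractf sum.distrib sum_distrib_left
  by (simp add: sum.swap[of _ A] sum_distrib_left)

lemma cdiff_diff: "cdiff n m (\<lambda>l. f l - g l) ks = cdiff n m f ks - cdiff n m g ks"
  by (simp add: cdiff_def cdiff_expr_diff)

lemma cdiff_scale: "cdiff n m (\<lambda>l. c * f l) ks = c * cdiff n m f ks"
  by (simp add: cdiff_def cdiff_expr_scale)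

lemma cdiff_uminus: "cdiff n m (\<lambda>l. - f l) ks = - cdiff n m f ks"
  using cdiff_scale[of n m "-1" f ks] by simp

lemma cdiff_sum: "cdiff n m (\<lambda>l. \<Sum>x\<in>A. f x l) ks = (\<Sum>x\<in>A. cdiff n m (f x) ks)"
  by (simp add: cdiff_def cdiff_expr_sum)

lemma mod_add_right_cancel: "(x + a) mod n = (y + a) mod (n::nat) \<Longrightarrow> x mod n = y mod n"
  by (simp add: nat_mod_eq_iff)

lemma sum_lessThan_shift_mod: "(\<Sum>x<n. f ((x + a) mod n)) = (\<Sum>x<(n::nat). f x)"
proof (cases "n = 0")
  case True then show ?thesis by simp
next
  case False
  have inj: "inj_on (\<lambda>x. (x + a) mod n) {..<n}"
    by (rule inj_onI) (metis mod_add_right_cancel mod_less lessThan_iff)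
  have im: "(\<lambda>x. (x + a) mod n) ` {..<n} = {..<n}"
    by (rule endo_inj_surj) (use False inj in auto)
  show ?thesis
    using sum.reindex[OF inj, of f] im by simp
qed

section \<open>Periodicity\<close>

definition sum_first :: "nat \<Rightarrow> nat \<Rightarrow> (nat list \<Rightarrow> 'r::comm_ring_1) \<Rightarrow> nat list \<Rightarrow> 'r" where
  "sum_first n m \<eta> ks = (if valid_idx n m ks then (\<Sum>x<n. \<eta> (x # ks)) else 0)"

lemma valid_idxD:
  assumes "valid_idx n m ks"
  shows "length ks = m" "set ks \<subseteq> {..<n}" "0 \<notin> set ks"
  using assms by (auto simp: valid_idx_def)

lemma sum_first_cyc_cochains: "sum_first n m \<eta> \<in> cyc_cochains n m"
  by (rule cyc_cochainsI) (simp add: sum_first_def)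

lemma sum_first_eq: "\<eta> \<in> cyc_cochains n (Suc m) \<Longrightarrow> (\<lambda>l. \<Sum>x<n. \<eta> (x # l)) = sum_first n m \<eta>"
proof
  fix l assume e: "\<eta> \<in> cyc_cochains n (Suc m)"
  show "(\<Sum>x<n. \<eta> (x # l)) = sum_first n m \<eta> l"
  proof (cases "valid_idx n m l")
    case True then show ?thesis by (simp add: sum_first_def)
  next
    case False
    then have "\<not> valid_idx n (Suc m) (x # l)" for x by (auto simp: valid_idx_def)
    then show ?thesis using False cyc_cochainsD[OF e] by (simp add: sum_first_def)
  qed
qed

lemma sum_first_cdiff:
  assumes e: "\<eta> \<in> cyc_cochains n (Suc m)"
  shows "sum_first n (Suc m) (cdiff n (Suc m) \<eta>) ks + cdiff n m (sum_first n m \<eta>) ks = of_nat n * \<eta> ks"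
proof (cases "valid_idx n (Suc m) ks")
  case False
  then show ?thesis using cyc_cochainsD[OF e False] by (simp add: sum_first_def cdiff_def)
next
  case True
  note v = valid_idxD[OF True]
  have hn: "hd ks < n" using v by (cases ks) auto
  have "sum_first n (Suc m) (cdiff n (Suc m) \<eta>) ks = (\<Sum>x<n. cdiff n (Suc m) \<eta> (x # ks))"
    using True by (simp add: sum_first_def)
  also have "\<dots> = (\<Sum>x<n. \<eta> ks - \<eta> (((x + hd ks) mod n) # tl ks)
           - cdiff n m (\<lambda>l. \<eta> (x # l)) ks + \<eta> (x # tl ks))"
    by (rule sum.cong[OF refl], rule cdiff_Cons[OF e]) (use v in auto)
  also have "\<dots> = of_nat n * \<eta> ks - (\<Sum>x<n. \<eta> (((x + hd ks) mod n) # tl ks))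
       - (\<Sum>x<n. cdiff n m (\<lambda>l. \<eta> (x # l)) ks) + (\<Sum>x<n. \<eta> (x # tl ks))"
    by (simp add: sum.distrib sum_subtractf)
  also have "(\<Sum>x<n. \<eta> (((x + hd ks) mod n) # tl ks)) = (\<Sum>x<n. \<eta> (x # tl ks))"
    by (rule sum_lessThan_shift_mod)
  also have "(\<Sum>x<n. cdiff n m (\<lambda>l. \<eta> (x # l)) ks) = cdiff n m (sum_first n m \<eta>) ks"
    unfolding cdiff_sum[symmetric] sum_first_eq[OF e] ..
  finally show ?thesis by simp
qed

definition partial_sum_first :: "nat \<Rightarrow> nat \<Rightarrow> (nat list \<Rightarrow> 'r::comm_ring_1) \<Rightarrow> nat list \<Rightarrow> 'r" where
  "partial_sum_first n m \<xi> ks = (if valid_idx n m ks then (\<Sum>j<hd ks. \<xi> (j # tl ks)) else 0)"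

text \<open>Cup product with the carry cocycle \<open>u(a, b) = [a + b \<ge> n]\<close>, the class of the extension
  \<open>\<int> \<rightarrow> \<int> \<rightarrow> \<int>/n\<close>.\<close>

definition u_cup :: "nat \<Rightarrow> nat \<Rightarrow> (nat list \<Rightarrow> 'r::comm_ring_1) \<Rightarrow> nat list \<Rightarrow> 'r" where
  "u_cup n m \<chi> ks = (if valid_idx n (Suc (Suc m)) ks \<and> n \<le> ks ! 0 + ks ! 1 then \<chi> (drop 2 ks) else 0)"

lemma partial_sum_first_cyc_cochains: "partial_sum_first n m \<xi> \<in> cyc_cochains n m"
  by (rule cyc_cochainsI) (simp add: partial_sum_first_def)

lemma u_cup_cyc_cochains: "u_cup n m \<chi> \<in> cyc_cochains n (Suc (Suc m))"
  by (rule cyc_cochainsI) (simp add: u_cup_def)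

lemma partial_sum_first_Cons:
  assumes \<xi>: "\<xi> \<in> cyc_cochains n (Suc m)" and a: "a < n"
  shows "partial_sum_first n (Suc m) \<xi> (a # w) = (\<Sum>j<a. \<xi> (j # w))"
proof (cases "valid_idx n (Suc m) (a # w)")
  case True
  then show ?thesis by (simp add: partial_sum_first_def)
next
  case False
  have "\<xi> (j # w) = 0" if "j < a" for j
    using False that a cyc_cochainsD[OF \<xi>] by (auto simp: valid_idx_def)
  then show ?thesis using False by (simp add: partial_sum_first_def)
qed

lemma sum_lessThan_carry:
  fixes f :: "nat \<Rightarrow> 'a::comm_monoid_add"
  assumes "a0 < n" "a1 < n"
  shows "(\<Sum>j<a0. f ((j + a1) mod n)) + (\<Sum>j<a1. f j)
       = (\<Sum>j<(a0 + a1) mod n. f j) + (if n \<le> a0 + a1 then (\<Sum>j<n. f j) else 0)"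
  using assms(1)
proof (induction a0)
  case 0
  then show ?case using assms by simp
next
  case (Suc a)
  have IH: "(\<Sum>j<a. f ((j + a1) mod n)) + (\<Sum>j<a1. f j)
       = (\<Sum>j<(a + a1) mod n. f j) + (if n \<le> a + a1 then (\<Sum>j<n. f j) else 0)"
    using Suc by simp
  have L: "(\<Sum>j<Suc a. f ((j + a1) mod n)) + (\<Sum>j<a1. f j)
      = (\<Sum>j<a. f ((j + a1) mod n)) + (\<Sum>j<a1. f j) + f ((a + a1) mod n)"
    by (simp add: add_ac)
  consider "a + a1 + 1 < n" | "a + a1 + 1 = n" | "n \<le> a + a1" by linarith
  then show ?case
  proof cases
    case 1
    then show ?thesis unfolding L IH by (simp add: add_ac)
  next
    case 2
    then have "(Suc a + a1) mod n = 0" by simp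
    moreover have "(\<Sum>j<n. f j) = (\<Sum>j<a + a1. f j) + f (a + a1)" using 2 by (metis lessThan_Suc sum.lessThan_Suc Suc_eq_plus1)
    ultimately show ?thesis unfolding L IH using 2 by (simp add: add_ac)
  next
    case 3
    have e1: "(a + a1) mod n = a + a1 - n" using 3 Suc.prems assms by (simp add: le_mod_geq)
    have e2: "(Suc a + a1) mod n = Suc (a + a1 - n)" using 3 Suc.prems assms
    proof -
      have "(Suc a + a1) mod n = (Suc a + a1 - n) mod n" using 3 by (simp add: le_mod_geq)
      also have "\<dots> = Suc a + a1 - n" using 3 Suc.prems assms by (intro mod_less) linarith
      finally show ?thesis using 3 by simp
    qed
    show ?thesis unfolding L IH e1 e2 using 3 by (simp add: add_ac)
  qed
qed

lemma sum_lessThan_shift_Suc_mod: "(\<Sum>x<n. f (Suc x mod n)) = (\<Sum>x<(n::nat). f x)"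
proof -
  have e: "(\<Sum>x<n. f (Suc x mod n)) = (\<Sum>x<n. f ((x + 1) mod n))" by simp
  show ?thesis unfolding e by (rule sum_lessThan_shift_mod)
qed

lemma mod_less_double: "a < 2 * n \<Longrightarrow> a mod n = (if a < n then a else a - (n::nat))"
  by (simp add: le_mod_geq)

text \<open>The cocycle identity of \<open>u\<close>: counting carries is associative.\<close>

lemma carry_count_assoc:
  assumes "0 < x" "x < n" "0 < y" "y < n" "0 < z" "z < (n::nat)"
  shows "(if n \<le> y + z then 1 else 0) + (if (y + z) mod n \<noteq> 0 \<and> n \<le> x + (y + z) mod n then 1 else 0)
       = (if (x + y) mod n \<noteq> 0 \<and> n \<le> (x + y) mod n + z then 1 else 0) + (if n \<le> x + y then 1 else (0::nat))"
  using assms by (auto simp: mod_less_double)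

lemma carry_assoc:
  assumes "0 < x" "x < n" "0 < y" "y < n" "0 < z" "z < (n::nat)"
  shows "(if n \<le> y + z then c else 0) - (if (x + y) mod n \<noteq> 0 \<and> n \<le> (x + y) mod n + z then c else 0)
     - ((if n \<le> x + z then c else 0) - (if (y + z) mod n \<noteq> 0 \<and> n \<le> x + (y + z) mod n then c else 0)
         - G + (if n \<le> x + y then c else 0)) + (if n \<le> x + z then c else 0) = (G::'a::comm_ring_1)"
  using carry_count_assoc[OF assms]
  by (cases "n \<le> y + z"; cases "(y + z) mod n \<noteq> 0 \<and> n \<le> x + (y + z) mod n";
      cases "(x + y) mod n \<noteq> 0 \<and> n \<le> (x + y) mod n + z"; cases "n \<le> x + y") auto

lemma cdiff_u_cup:
  assumes chi: "\<chi> \<in> cyc_cochains n m"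
  shows "cdiff n (Suc (Suc m)) (u_cup n m \<chi>) ks = u_cup n (Suc m) (cdiff n m \<chi>) ks"
proof (cases "valid_idx n (Suc (Suc (Suc m))) ks")
  case False
  then show ?thesis by (simp add: cdiff_def u_cup_def)
next
  case True
  obtain x y z v where ks: "ks = x # y # z # v" and lv: "length v = m"
    using valid_idxD(1)[OF True] by (metis length_Suc_conv)
  have x: "0 < x" "x < n" and y: "0 < y" "y < n" and z: "0 < z" "z < n" and vv: "valid_idx n m v"
    using True ks by (auto simp: valid_idx_def)
  have zv: "valid_idx n (Suc m) (z # v)" using z vv by (auto simp: valid_idx_def)
  let ?U = "u_cup n m \<chi>"
  have U1: "?U (a # b # v) = (if a \<noteq> 0 \<and> a < n \<and> b \<noteq> 0 \<and> b < n \<and> n \<le> a + b then \<chi> v else 0)" for a b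
    using vv by (auto simp: u_cup_def valid_idx_def)
  have sl: "(\<lambda>l. ?U (x # l)) \<in> cyc_cochains n (Suc m)" by (rule cyc_cochains_Cons_slice[OF u_cup_cyc_cochains])
  have sl2: "(\<lambda>l. ?U (x # y # l)) = (\<lambda>l. if n \<le> x + y then \<chi> l else 0)"
  proof
    fix l show "?U (x # y # l) = (if n \<le> x + y then \<chi> l else 0)"
      using cyc_cochainsD[OF chi] x y by (cases "valid_idx n m l") (auto simp: u_cup_def valid_idx_def)
  qed
  have "cdiff n (Suc (Suc m)) ?U ks = ?U (y # z # v) - ?U (((x + y) mod n) # z # v)
        - cdiff n (Suc m) (\<lambda>l. ?U (x # l)) (y # z # v) + ?U (x # z # v)"
    unfolding ks by (subst cdiff_Cons[OF u_cup_cyc_cochains]) (use x y z vv lv in \<open>auto simp: valid_idx_def\<close>)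
  also have "cdiff n (Suc m) (\<lambda>l. ?U (x # l)) (y # z # v) = ?U (x # z # v) - ?U (x # ((y + z) mod n) # v)
        - cdiff n m (\<lambda>l. ?U (x # y # l)) (z # v) + ?U (x # y # v)"
    by (subst cdiff_Cons[OF sl]) (use x y z vv lv in \<open>auto simp: valid_idx_def\<close>)
  also have "cdiff n m (\<lambda>l. ?U (x # y # l)) (z # v) = (if n \<le> x + y then cdiff n m \<chi> (z # v) else 0)"
    unfolding sl2 by (cases "n \<le> x + y") (simp_all add: cdiff_scale[of _ _ 1, simplified])
  finally have F: "cdiff n (Suc (Suc m)) ?U ks = ?U (y # z # v) - ?U (((x + y) mod n) # z # v) -
    (?U (x # z # v) - ?U (x # ((y + z) mod n) # v) - (if n \<le> x + y then cdiff n m \<chi> (z # v) else 0)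
      + ?U (x # y # v)) + ?U (x # z # v)" .
  have u: "?U (y # z # v) = (if n \<le> y + z then \<chi> v else 0)"
    "?U (((x + y) mod n) # z # v) = (if (x + y) mod n \<noteq> 0 \<and> n \<le> (x + y) mod n + z then \<chi> v else 0)"
    "?U (x # z # v) = (if n \<le> x + z then \<chi> v else 0)"
    "?U (x # ((y + z) mod n) # v) = (if (y + z) mod n \<noteq> 0 \<and> n \<le> x + (y + z) mod n then \<chi> v else 0)"
    "?U (x # y # v) = (if n \<le> x + y then \<chi> v else 0)"
    using x y z U1 by simp_all
  have "cdiff n (Suc (Suc m)) ?U ks = (if n \<le> x + y then cdiff n m \<chi> (z # v) else 0)"
    unfolding F u by (rule carry_assoc[OF x y z])
  moreover have "u_cup n (Suc m) (cdiff n m \<chi>) ks = (if n \<le> x + y then cdiff n m \<chi> (z # v) else 0)"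
    using True ks by (simp add: u_cup_def)
  ultimately show ?thesis by simp
qed

primrec u_pow :: "nat \<Rightarrow> nat \<Rightarrow> nat list \<Rightarrow> 'r::comm_ring_1" where
  "u_pow n 0 = (\<lambda>ks. if ks = [] then 1 else 0)"
| "u_pow n (Suc k) = u_cup n (2 * k) (u_pow n k)"

lemma cyc_cochains_diff: "f \<in> cyc_cochains n m \<Longrightarrow> g \<in> cyc_cochains n m \<Longrightarrow> (\<lambda>l. f l - g l) \<in> cyc_cochains n m"
  by (rule cyc_cochainsI) (simp add: cyc_cochainsD)
lemma cyc_cochains_scale: "f \<in> cyc_cochains n m \<Longrightarrow> (\<lambda>l. c * f l) \<in> cyc_cochains n m"
  by (rule cyc_cochainsI) (simp add: cyc_cochainsD)
lemma cyc_cochains_uminus: "f \<in> cyc_cochains n m \<Longrightarrow> (\<lambda>l. - f l) \<in> cyc_cochains n m"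
  by (rule cyc_cochainsI) (simp add: cyc_cochainsD)
lemma cyc_cochains_zero: "(\<lambda>l. 0) \<in> cyc_cochains n m"
  by (rule cyc_cochainsI) simp

lemma u_cup_zero [simp]: "u_cup n m (\<lambda>l. 0) ks = 0"
  by (simp add: u_cup_def)

lemma u_cup_scale: "u_cup n m (\<lambda>l. c * f l) ks = c * u_cup n m f ks"
  by (simp add: u_cup_def)

lemma u_pow_cyc_cochains: "u_pow n k \<in> cyc_cochains n (2 * k)"
proof (induction k)
  case 0
  show ?case by (rule cyc_cochainsI) (auto simp: valid_idx_def)
next
  case (Suc k)
  show ?case using u_cup_cyc_cochains[of n "2 * k" "u_pow n k"] by simp
qed

lemma cdiff_u_pow: "cdiff n (2 * k) (u_pow n k :: nat list \<Rightarrow> 'r::comm_ring_1) ks = 0"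
proof (induction k arbitrary: ks)
  case 0 then show ?case by simp
next
  case (Suc k)
  have "cdiff n (2 * Suc k) (u_pow n (Suc k)) ks = u_cup n (Suc (2 * k)) (cdiff n (2 * k) (u_pow n k)) ks"
    using cdiff_u_cup[OF u_pow_cyc_cochains[of n k]] by simp
  also have "cdiff n (2 * k) (u_pow n k :: nat list \<Rightarrow> 'r) = (\<lambda>l. 0)" using Suc by (intro ext) auto
  finally show ?case by simp
qed

fun cyc_coboundary :: "nat \<Rightarrow> nat \<Rightarrow> (nat list \<Rightarrow> 'r::comm_ring_1) \<Rightarrow> bool" where
  "cyc_coboundary n 0 f \<longleftrightarrow> f = (\<lambda>_. 0)"
| "cyc_coboundary n (Suc m) f \<longleftrightarrow> (\<exists>g \<in> cyc_cochains n m. f = cdiff n m g)"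

lemma cyc_cochains_trivial_group:
  assumes "\<phi> \<in> cyc_cochains (Suc 0) (Suc m)"
  shows "\<phi> = (\<lambda>_. 0)"
proof -
  have "\<not> valid_idx (Suc 0) (Suc m) ks" for ks
    by (cases ks) (auto simp: valid_idx_def)
  then show ?thesis using assms by (auto simp: cyc_cochains_def fun_eq_iff)
qed

lemma cyc_coboundary_cdiff: "g \<in> cyc_cochains n m \<Longrightarrow> cyc_coboundary n (Suc m) (cdiff n m g)"
  by auto

lemma cyc_coboundary_zero: "cyc_coboundary n m (\<lambda>_. 0)"
  by (cases m) (auto intro!: bexI[of _ "\<lambda>_. 0"] cyc_cochains_zero)

lemma cyc_coboundary_diff:
  assumes "cyc_coboundary n m f" "cyc_coboundary n m g"
  shows "cyc_coboundary n m (\<lambda>ks. f ks - g ks)"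
proof (cases m)
  case (Suc m')
  then obtain f' g' where "f' \<in> cyc_cochains n m'" "f = cdiff n m' f'"
    "g' \<in> cyc_cochains n m'" "g = cdiff n m' g'"
    using assms by auto
  then show ?thesis
    using Suc by (auto intro!: bexI[of _ "\<lambda>l. f' l - g' l"] cyc_cochains_diff simp: cdiff_diff)
qed (use assms in auto)

lemma cyc_coboundary_u_cup:
  assumes "cyc_coboundary n m f"
  shows "cyc_coboundary n (Suc (Suc m)) (u_cup n m f)"
proof (cases m)
  case 0
  then have "u_cup n m f = cdiff n (Suc m) (\<lambda>_. 0)"
    using assms by (simp add: fun_eq_iff u_cup_def)
  then show ?thesis using cyc_cochains_zero by auto
next
  case (Suc m')
  then obtain g where g: "g \<in> cyc_cochains n m'" and f: "f = cdiff n m' g"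
    using assms by auto
  have "u_cup n m f = cdiff n (Suc m) (u_cup n m' g)"
    using Suc cdiff_u_cup[OF g] by (simp add: f fun_eq_iff)
  then show ?thesis
    using Suc u_cup_cyc_cochains by auto
qed

text \<open>A cocycle \<open>\<phi>\<close> of degree \<open>m + 2\<close> is determined, up to a coboundary, by its slice
  \<open>\<phi>(1, -)\<close> at the generator: the cocycle identity evaluated at \<open>(1, a, w)\<close> expresses
  \<open>\<phi>(a + 1, w)\<close> through \<open>\<phi>(a, w)\<close>, and summing the resulting telescope over the first
  argument yields \<open>\<phi> \<sim> u \<union> \<Sigma>\<^sub>x \<phi>(1, x, -)\<close>.\<close>

context
  fixes n m :: nat and \<phi> :: "nat list \<Rightarrow> 'r::comm_ring_1"
  assumes n_pos: "0 < n" and \<phi>: "\<phi> \<in> cyc_cochains n (Suc (Suc m))"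
    and cocycle: "\<And>ks. cdiff n (Suc (Suc m)) \<phi> ks = 0"
begin

lemma cocycle_slice_cdiff:
  assumes n_gt1: "1 < n" and "a < n" "length w = Suc m" "set w \<subseteq> {..<n}"
  shows "cdiff n (Suc m) (\<lambda>l. \<phi> (1 # l)) (a # w)
    = \<phi> (a # w) - \<phi> (((1 + a) mod n) # w) + \<phi> (1 # w)"
  using cdiff_Cons[OF \<phi>, of 1 "a # w"] cocycle[of "1 # a # w"] assms n_gt1
  by (simp add: algebra_simps)

lemma cocycle_eq_telescope:
  assumes n_gt1: "1 < n" and "b < n" "length w = Suc m" "set w \<subseteq> {..<n}"
  shows "\<phi> (b # w) = of_nat b * \<phi> (1 # w) - (\<Sum>j<b. cdiff n (Suc m) (\<lambda>l. \<phi> (1 # l)) (j # w))"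
  using assms(2)
proof (induction b)
  case 0
  then show ?case using cyc_cochains_zero_entry[OF \<phi>] by simp
next
  case (Suc b)
  have "cdiff n (Suc m) (\<lambda>l. \<phi> (1 # l)) (b # w) = \<phi> (b # w) - \<phi> (((1 + b) mod n) # w) + \<phi> (1 # w)"
    by (rule cocycle_slice_cdiff) (use Suc assms in auto)
  moreover have "(1 + b) mod n = Suc b" using Suc by simp
  ultimately show ?case using Suc by (simp add: algebra_simps)
qed

lemma cdiff_sum_first_slice: "cdiff n m (sum_first n m (\<lambda>l. \<phi> (1 # l))) ks = 0"
proof (cases "n = 1")
  case True
  then have "sum_first n m (\<lambda>l. \<phi> (1 # l)) = (\<lambda>_. 0)"
    using cyc_cochains_zero_entry[OF \<phi>] by (auto simp: fun_eq_iff sum_first_def valid_idx_def)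
  then show ?thesis by simp
next
  case False
  then have n_gt1: "1 < n" using n_pos by simp
  have slice: "(\<lambda>l. \<phi> (1 # l)) \<in> cyc_cochains n (Suc m)"
    by (rule cyc_cochains_Cons_slice[OF \<phi>])
  have "sum_first n (Suc m) (cdiff n (Suc m) (\<lambda>l. \<phi> (1 # l))) ks = of_nat n * \<phi> (1 # ks)"
  proof (cases "valid_idx n (Suc m) ks")
    case False
    then show ?thesis using cyc_cochainsD[OF slice False] by (simp add: sum_first_def)
  next
    case True
    note v = valid_idxD[OF True]
    have "sum_first n (Suc m) (cdiff n (Suc m) (\<lambda>l. \<phi> (1 # l))) ks
        = (\<Sum>a<n. cdiff n (Suc m) (\<lambda>l. \<phi> (1 # l)) (a # ks))"
      using True by (simp add: sum_first_def)
    also have "\<dots> = (\<Sum>a<n. \<phi> (a # ks) - \<phi> (((a + 1) mod n) # ks) + \<phi> (1 # ks))"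
      by (rule sum.cong[OF refl])
        (subst cocycle_slice_cdiff[OF n_gt1], use v in \<open>auto simp: add.commute\<close>)
    also have "\<dots> = of_nat n * \<phi> (1 # ks)"
      by (simp add: sum.distrib sum_subtractf sum_lessThan_shift_Suc_mod[of "\<lambda>x. \<phi> (x # ks)"])
    finally show ?thesis .
  qed
  then show ?thesis using sum_first_cdiff[OF slice, of ks] by simp
qed

lemma cocycle_periodicity:
  assumes n_gt1: "1 < n"
  shows "\<phi> ks + cdiff n (Suc m) (partial_sum_first n (Suc m) (\<lambda>l. \<phi> (1 # l))) ks
    = u_cup n m (sum_first n m (\<lambda>l. \<phi> (1 # l))) ks"
proof (cases "valid_idx n (Suc (Suc m)) ks")
  case False
  then show ?thesis using cyc_cochainsD[OF \<phi> False] by (simp add: u_cup_def cdiff_def)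
next
  case True
  let ?\<xi> = "\<lambda>l. \<phi> (1 # l)"
  have slice: "?\<xi> \<in> cyc_cochains n (Suc m)" by (rule cyc_cochains_Cons_slice[OF \<phi>])
  obtain a0 a1 w where ks: "ks = a0 # a1 # w"
    using valid_idxD(1)[OF True] by (metis length_Suc_conv)
  have a0: "a0 < n" and a1: "a1 < n" and w: "valid_idx n m w"
    using True ks by (auto simp: valid_idx_def)
  have a1w: "length (a1 # w) = Suc m" "set (a1 # w) \<subseteq> {..<n}"
    using a1 w by (auto simp: valid_idx_def)
  let ?S = "\<lambda>b. \<Sum>j<b. ?\<xi> (j # w)"
  let ?D = "\<Sum>j<a0. cdiff n m (\<lambda>l. ?\<xi> (j # l)) (a1 # w)"
  have "(\<Sum>j<a0. cdiff n (Suc m) ?\<xi> (j # a1 # w)) = (\<Sum>j<a0. ?\<xi> (a1 # w)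
      - ?\<xi> (((j + a1) mod n) # w) - cdiff n m (\<lambda>l. ?\<xi> (j # l)) (a1 # w) + ?\<xi> (j # w))"
    by (rule sum.cong[OF refl], subst cdiff_Cons[OF slice]) (use a0 a1w in auto)
  then have \<phi>_ks: "\<phi> ks = (\<Sum>j<a0. ?\<xi> (((j + a1) mod n) # w)) + ?D - ?S a0"
    unfolding ks cocycle_eq_telescope[OF n_gt1 a0 a1w] by (simp add: sum.distrib sum_subtractf)
  have "cdiff n (Suc m) (partial_sum_first n (Suc m) ?\<xi>) ks
      = partial_sum_first n (Suc m) ?\<xi> (a1 # w)
        - partial_sum_first n (Suc m) ?\<xi> (((a0 + a1) mod n) # w)
        - cdiff n m (\<lambda>l. partial_sum_first n (Suc m) ?\<xi> (a0 # l)) (a1 # w)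
        + partial_sum_first n (Suc m) ?\<xi> (a0 # w)"
    unfolding ks using cdiff_Cons[OF partial_sum_first_cyc_cochains[of n "Suc m" ?\<xi>], of a0 "a1 # w"] a0 a1w by simp
  also have "\<dots> = ?S a1 - ?S ((a0 + a1) mod n) - ?D + ?S a0"
    using n_pos by (simp only: partial_sum_first_Cons[OF slice] a0 a1 mod_less_divisor cdiff_sum)
  finally have psf: "cdiff n (Suc m) (partial_sum_first n (Suc m) ?\<xi>) ks
      = ?S a1 - ?S ((a0 + a1) mod n) - ?D + ?S a0" .
  have u_cup: "u_cup n m (sum_first n m ?\<xi>) ks = (if n \<le> a0 + a1 then ?S n else 0)"
    using True w ks by (simp add: u_cup_def sum_first_def)
  have ring: "A + S1 = C + U \<Longrightarrow> (A + D - S0) + (S1 - C - D + S0) = U" for A S1 C U D S0 :: 'r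
    by (simp add: algebra_simps)
  show ?thesis
    unfolding \<phi>_ks psf u_cup by (rule ring[OF sum_lessThan_carry[OF a0 a1]])
qed

lemma cyc_coboundary_sub_u_cup:
  assumes "cyc_coboundary n m (\<lambda>ks. sum_first n m (\<lambda>l. \<phi> (1 # l)) ks - \<psi> ks)"
  shows "cyc_coboundary n (Suc (Suc m)) (\<lambda>ks. \<phi> ks - u_cup n m \<psi> ks)"
proof (cases "n = 1")
  case True
  then have "(\<lambda>ks. \<phi> ks - u_cup n m \<psi> ks) = (\<lambda>_. 0)"
    using cyc_cochains_trivial_group[OF \<phi>[unfolded True One_nat_def]]
      cyc_cochains_trivial_group[OF u_cup_cyc_cochains[of "Suc 0" m \<psi>]] by simp
  then show ?thesis by (simp only: cyc_coboundary_zero)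
next
  case False
  then have n_gt1: "1 < n" using n_pos by simp
  let ?\<xi> = "\<lambda>l. \<phi> (1 # l)"
  have "(\<lambda>ks. \<phi> ks - u_cup n m \<psi> ks) = (\<lambda>ks. u_cup n m (\<lambda>l. sum_first n m ?\<xi> l - \<psi> l) ks
      - cdiff n (Suc m) (partial_sum_first n (Suc m) ?\<xi>) ks)"
    using cocycle_periodicity[OF n_gt1] by (simp add: fun_eq_iff u_cup_def algebra_simps)
  then show ?thesis
    using cyc_coboundary_diff[OF cyc_coboundary_u_cup[OF assms]
        cyc_coboundary_cdiff[OF partial_sum_first_cyc_cochains]] by simp
qed

end

lemma deg1_cocycle_zero:
  fixes \<phi> :: "nat list \<Rightarrow> 'r::idom"
  assumes n_pos: "0 < n" and n_nonzero: "of_nat n \<noteq> (0::'r)" and \<phi>: "\<phi> \<in> cyc_cochains n 1"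
    and cocycle: "\<And>ks. cdiff n 1 \<phi> ks = 0"
  shows "\<phi> = (\<lambda>_. 0)"
proof (cases "n = 1")
  case True
  then show ?thesis using cyc_cochains_trivial_group \<phi> by simp
next
  case False
  then have n_gt1: "1 < n" using n_pos by simp
  have step: "\<phi> [(1 + a) mod n] = \<phi> [a] + \<phi> [1]" if "a < n" for a
    using cdiff_Cons[OF \<phi>[simplified], of 1 "[a]"] cocycle[of "[1, a]"] that n_gt1
    by (simp add: algebra_simps)
  have linear: "\<phi> [b] = of_nat b * \<phi> [1]" if "b < n" for b
    using that
  proof (induction b)
    case 0
    then show ?case using cyc_cochains_zero_entry[OF \<phi>, of "[0]"] by simp
  next
    case (Suc b)
    then show ?case using step[of b] by (simp add: algebra_simps)
  qed
  have "of_nat n * \<phi> [1] = 0"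
    using step[of "n - 1"] linear[of "n - 1"] n_gt1 cyc_cochains_zero_entry[OF \<phi>, of "[0]"]
    by (simp add: algebra_simps of_nat_diff)
  then have "\<phi> [1] = 0" using n_nonzero by simp
  show ?thesis
  proof
    fix ks
    show "\<phi> ks = 0"
    proof (cases "valid_idx n 1 ks")
      case True
      then obtain b where "ks = [b]" "b < n" by (auto simp: valid_idx_def length_Suc_conv)
      then show ?thesis using linear \<open>\<phi> [1] = 0\<close> by simp
    qed (use cyc_cochainsD[OF \<phi>] in auto)
  qed
qed

lemma odd_cocycle_coboundary:
  fixes \<phi> :: "nat list \<Rightarrow> 'r::idom"
  assumes "0 < n" "of_nat n \<noteq> (0::'r)"
  shows "\<phi> \<in> cyc_cochains n (Suc (2 * k)) \<Longrightarrow> (\<And>ks. cdiff n (Suc (2 * k)) \<phi> ks = 0)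
    \<Longrightarrow> cyc_coboundary n (Suc (2 * k)) \<phi>"
proof (induction k arbitrary: \<phi>)
  case 0
  then have "\<phi> = cdiff n 0 (\<lambda>_. 0)"
    using deg1_cocycle_zero[OF assms] by (auto simp: fun_eq_iff)
  then show ?case by (auto intro!: bexI[of _ "\<lambda>_. 0"] cyc_cochains_zero)
next
  case (Suc k)
  let ?\<xi> = "\<lambda>l. \<phi> (1 # l)"
  have \<phi>: "\<phi> \<in> cyc_cochains n (Suc (Suc (Suc (2 * k))))"
    and cocycle: "\<And>ks. cdiff n (Suc (Suc (Suc (2 * k)))) \<phi> ks = 0"
    using Suc.prems by simp_all
  have "cyc_coboundary n (Suc (2 * k)) (sum_first n (Suc (2 * k)) ?\<xi>)"
    by (rule Suc.IH[OF sum_first_cyc_cochains cdiff_sum_first_slice[OF assms(1) \<phi> cocycle]])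
  then have "cyc_coboundary n (Suc (Suc (Suc (2 * k)))) (\<lambda>ks. \<phi> ks - u_cup n (Suc (2 * k)) (\<lambda>_. 0) ks)"
    by (intro cyc_coboundary_sub_u_cup[OF assms(1) \<phi> cocycle]) simp
  then show ?case by simp
qed

lemma even_cocycle_u_pow:
  fixes \<phi> :: "nat list \<Rightarrow> 'r::comm_ring_1"
  assumes "0 < n"
  shows "\<phi> \<in> cyc_cochains n (2 * k) \<Longrightarrow> (\<And>ks. cdiff n (2 * k) \<phi> ks = 0)
    \<Longrightarrow> \<exists>c. cyc_coboundary n (2 * k) (\<lambda>ks. \<phi> ks - c * u_pow n k ks)"
proof (induction k arbitrary: \<phi>)
  case 0
  then have "(\<lambda>ks. \<phi> ks - \<phi> [] * u_pow n 0 ks) = (\<lambda>_. 0)"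
    by (auto simp: fun_eq_iff cyc_cochains_def valid_idx_def)
  then show ?case by auto
next
  case (Suc k)
  let ?\<xi> = "\<lambda>l. \<phi> (1 # l)"
  have \<phi>: "\<phi> \<in> cyc_cochains n (Suc (Suc (2 * k)))"
    and cocycle: "\<And>ks. cdiff n (Suc (Suc (2 * k))) \<phi> ks = 0"
    using Suc.prems by simp_all
  obtain c where "cyc_coboundary n (2 * k) (\<lambda>ks. sum_first n (2 * k) ?\<xi> ks - c * u_pow n k ks)"
    using Suc.IH[OF sum_first_cyc_cochains cdiff_sum_first_slice[OF assms \<phi> cocycle]] by blast
  then have "cyc_coboundary n (Suc (Suc (2 * k))) (\<lambda>ks. \<phi> ks - u_cup n (2 * k) (\<lambda>l. c * u_pow n k l) ks)"
    by (intro cyc_coboundary_sub_u_cup[OF assms \<phi> cocycle])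
  then show ?case by (auto simp: u_cup_scale)
qed

section \<open>Detecting multiples of \<open>n\<close>\<close>

text \<open>Evaluation on the \<open>2k\<close>-chain \<open>\<Sum>\<^sub>x [x\<^sub>1|1|\<dots>|x\<^sub>k|1]\<close>; its boundary is \<open>n\<close> times a chain,
  and \<open>u\<^sup>k\<close> takes the value \<open>1\<close> on it.\<close>

primrec cycle_eval :: "nat \<Rightarrow> nat \<Rightarrow> (nat list \<Rightarrow> 'r::comm_ring_1) \<Rightarrow> 'r" where
  "cycle_eval n 0 f = f []"
| "cycle_eval n (Suc k) f = (\<Sum>x<n. cycle_eval n k (\<lambda>r. f (x # 1 # r)))"

lemma cycle_eval_cong:
  "1 < n \<Longrightarrow> (\<And>r. length r = 2 * k \<Longrightarrow> set r \<subseteq> {..<n} \<Longrightarrow> f r = g r) \<Longrightarrow> cycle_eval n k f = cycle_eval n k g"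
proof (induction k arbitrary: f g)
  case 0 then show ?case by simp
next
  case (Suc k)
  show ?case
    by (simp, rule sum.cong[OF refl], rule Suc.IH) (use Suc.prems in auto)
qed

lemma cycle_eval_add: "cycle_eval n k (\<lambda>r. f r + g r) = cycle_eval n k f + cycle_eval n k g"
  by (induction k arbitrary: f g) (simp_all add: sum.distrib)

lemma cycle_eval_diff: "cycle_eval n k (\<lambda>r. f r - g r) = cycle_eval n k f - cycle_eval n k g"
  by (induction k arbitrary: f g) (simp_all add: sum_subtractf)

lemma cycle_eval_scale: "cycle_eval n k (\<lambda>r. c * f r) = c * cycle_eval n k f"
  by (induction k arbitrary: f) (simp_all add: sum_distrib_left)

text \<open>This lemma and the next are proved by a joint induction: the statement about slices of
  even-degree coboundaries at \<open>k\<close> gives this one at \<open>k\<close>, which gives the former at \<open>k + 1\<close>.\<close>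

lemma cycle_eval_cdiff_if_slice:
  fixes \<psi> :: "nat list \<Rightarrow> 'r::comm_ring_1"
  assumes B: "\<And>\<psi>' :: nat list \<Rightarrow> 'r. \<psi>' \<in> cyc_cochains n (2 * k) \<Longrightarrow> cycle_eval n k (\<lambda>r. cdiff n (2 * k) \<psi>' (1 # r)) = 0"
    and n2: "1 < n" and C: "\<psi> \<in> cyc_cochains n (Suc (2 * k))"
  shows "cycle_eval n (Suc k) (cdiff n (Suc (2 * k)) \<psi>) = of_nat n * cycle_eval n k (\<lambda>r. \<psi> (1 # r))"
proof -
  have "cycle_eval n (Suc k) (cdiff n (Suc (2 * k)) \<psi>) = (\<Sum>x<n. cycle_eval n k (\<lambda>r. cdiff n (Suc (2 * k)) \<psi> (x # 1 # r)))"
    by simp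
  also have "\<dots> = (\<Sum>x<n. cycle_eval n k (\<lambda>r. \<psi> (1 # r) - \<psi> (((x + 1) mod n) # r)
      - cdiff n (2 * k) (\<lambda>l. \<psi> (x # l)) (1 # r) + \<psi> (x # r)))"
  proof (rule sum.cong[OF refl], rule cycle_eval_cong[OF n2])
    fix x r assume "x \<in> {..<n}" "length r = 2 * k" "set r \<subseteq> {..<n}"
    then show "cdiff n (Suc (2 * k)) \<psi> (x # 1 # r) = \<psi> (1 # r) - \<psi> (((x + 1) mod n) # r)
      - cdiff n (2 * k) (\<lambda>l. \<psi> (x # l)) (1 # r) + \<psi> (x # r)"
      using cdiff_Cons[OF C, of x "1 # r"] n2 by simp
  qed
  also have "\<dots> = (\<Sum>x<n. cycle_eval n k (\<lambda>r. \<psi> (1 # r)) - cycle_eval n k (\<lambda>r. \<psi> (((x + 1) mod n) # r))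
      - cycle_eval n k (\<lambda>r. cdiff n (2 * k) (\<lambda>l. \<psi> (x # l)) (1 # r)) + cycle_eval n k (\<lambda>r. \<psi> (x # r)))"
    by (simp add: cycle_eval_add cycle_eval_diff)
  also have "\<dots> = (\<Sum>x<n. cycle_eval n k (\<lambda>r. \<psi> (1 # r)) - cycle_eval n k (\<lambda>r. \<psi> (((x + 1) mod n) # r))
      + cycle_eval n k (\<lambda>r. \<psi> (x # r)))"
  proof -
    have "cycle_eval n k (\<lambda>r. cdiff n (2 * k) (\<lambda>l. \<psi> (x # l)) (1 # r)) = 0" for x
      by (rule B[OF cyc_cochains_Cons_slice[OF C]])
    then show ?thesis by simp
  qed
  also have "\<dots> = of_nat n * cycle_eval n k (\<lambda>r. \<psi> (1 # r))"
    using sum_lessThan_shift_Suc_mod[of "\<lambda>y. cycle_eval n k (\<lambda>r. \<psi> (y # r))" n]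
    by (simp add: sum.distrib sum_subtractf)
  finally show ?thesis .
qed

lemma cycle_eval_cdiff_slice:
  assumes n2: "1 < n"
  shows "\<psi> \<in> cyc_cochains n (2 * k) \<Longrightarrow> cycle_eval n k (\<lambda>r. cdiff n (2 * k) \<psi> (1 # r)) = 0"
proof (induction k arbitrary: \<psi>)
  case 0 then show ?case by simp
next
  case (Suc k)
  have C: "\<psi> \<in> cyc_cochains n (Suc (Suc (2 * k)))" using Suc.prems by simp
  have a1C: "(\<lambda>l. \<psi> (1 # l)) \<in> cyc_cochains n (Suc (2 * k))" by (rule cyc_cochains_Cons_slice[OF C])
  have "cycle_eval n (Suc k) (\<lambda>r. cdiff n (2 * Suc k) \<psi> (1 # r))
      = (\<Sum>x<n. cycle_eval n k (\<lambda>r. cdiff n (Suc (Suc (2 * k))) \<psi> (1 # x # 1 # r)))"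
    by simp
  also have "\<dots> = (\<Sum>x<n. cycle_eval n k (\<lambda>r. \<psi> (x # 1 # r) - \<psi> (((x + 1) mod n) # 1 # r)
      - cdiff n (Suc (2 * k)) (\<lambda>l. \<psi> (1 # l)) (x # 1 # r) + \<psi> (1 # 1 # r)))"
  proof (rule sum.cong[OF refl], rule cycle_eval_cong[OF n2])
    fix x r assume "x \<in> {..<n}" "length r = 2 * k" "set r \<subseteq> {..<n}"
    then show "cdiff n (Suc (Suc (2 * k))) \<psi> (1 # x # 1 # r) = \<psi> (x # 1 # r) - \<psi> (((x + 1) mod n) # 1 # r)
      - cdiff n (Suc (2 * k)) (\<lambda>l. \<psi> (1 # l)) (x # 1 # r) + \<psi> (1 # 1 # r)"
      using cdiff_Cons[OF C, of 1 "x # 1 # r"] n2 by (simp add: add.commute)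
  qed
  also have "\<dots> = (\<Sum>x<n. cycle_eval n k (\<lambda>r. \<psi> (x # 1 # r)) - cycle_eval n k (\<lambda>r. \<psi> (((x + 1) mod n) # 1 # r))
      - cycle_eval n k (\<lambda>r. cdiff n (Suc (2 * k)) (\<lambda>l. \<psi> (1 # l)) (x # 1 # r)) + cycle_eval n k (\<lambda>r. \<psi> (1 # 1 # r)))"
    by (simp add: cycle_eval_add cycle_eval_diff)
  also have "\<dots> = (\<Sum>x<n. cycle_eval n k (\<lambda>r. \<psi> (x # 1 # r))) - (\<Sum>x<n. cycle_eval n k (\<lambda>r. \<psi> (((x + 1) mod n) # 1 # r)))
      - cycle_eval n (Suc k) (cdiff n (Suc (2 * k)) (\<lambda>l. \<psi> (1 # l))) + of_nat n * cycle_eval n k (\<lambda>r. \<psi> (1 # 1 # r))"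
    by (simp add: sum.distrib sum_subtractf)
  also have "cycle_eval n (Suc k) (cdiff n (Suc (2 * k)) (\<lambda>l. \<psi> (1 # l))) = of_nat n * cycle_eval n k (\<lambda>r. \<psi> (1 # 1 # r))"
    using cycle_eval_cdiff_if_slice[OF Suc.IH n2 a1C] by simp
  also have "(\<Sum>x<n. cycle_eval n k (\<lambda>r. \<psi> (((x + 1) mod n) # 1 # r))) = (\<Sum>x<n. cycle_eval n k (\<lambda>r. \<psi> (x # 1 # r)))"
    by (rule sum_lessThan_shift_mod[of "\<lambda>y. cycle_eval n k (\<lambda>r. \<psi> (y # 1 # r))"])
  finally show ?case by simp
qed

lemma cycle_eval_cdiff:
  "1 < n \<Longrightarrow> \<psi> \<in> cyc_cochains n (Suc (2 * k)) \<Longrightarrow>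
    cycle_eval n (Suc k) (cdiff n (Suc (2 * k)) \<psi>) = of_nat n * cycle_eval n k (\<lambda>r. \<psi> (1 # r))"
  by (rule cycle_eval_cdiff_if_slice[OF cycle_eval_cdiff_slice])

lemma cycle_eval_u_pow: "1 < n \<Longrightarrow> cycle_eval n k (u_pow n k :: nat list \<Rightarrow> 'r::comm_ring_1) = 1"
proof (induction k)
  case 0 then show ?case by simp
next
  case (Suc k)
  have "cycle_eval n (Suc k) (u_pow n (Suc k) :: nat list \<Rightarrow> 'r) = (\<Sum>x<n. cycle_eval n k (\<lambda>r. u_cup n (2 * k) (u_pow n k) (x # 1 # r)))"
    by simp
  also have "\<dots> = (\<Sum>x<n. cycle_eval n k (\<lambda>r. (if x = n - 1 then 1 else 0) * (u_pow n k r :: 'r)))"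
  proof (rule sum.cong[OF refl], rule cycle_eval_cong[OF Suc.prems])
    fix x r assume x: "x \<in> {..<n}" and r: "length r = 2 * k" "set r \<subseteq> {..<n}"
    show "u_cup n (2 * k) (u_pow n k) (x # 1 # r) = (if x = n - 1 then 1 else 0) * (u_pow n k r :: 'r)"
    proof (cases "valid_idx n (2 * k) r")
      case False
      have u0: "u_pow n k r = (0::'r)" using cyc_cochainsD[OF u_pow_cyc_cochains False] .
      then show ?thesis by (simp add: u_cup_def)
    next
      case True
      then show ?thesis using x Suc.prems by (auto simp: u_cup_def valid_idx_def)
    qed
  qed
  also have "\<dots> = (\<Sum>x<n. (if x = n - 1 then 1 else 0) * cycle_eval n k (u_pow n k :: nat list \<Rightarrow> 'r))"
    by (simp add: cycle_eval_scale)
  also have "\<dots> = 1" using Suc by simp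
  finally show ?case .
qed

lemma u_pow_coboundary_dvd:
  fixes c :: "'r::comm_ring_1"
  assumes n_gt1: "1 < n" and "cyc_coboundary n (Suc (Suc (2 * k))) (\<lambda>ks. c * u_pow n (Suc k) ks)"
  shows "of_nat n dvd c"
proof -
  obtain g where g: "g \<in> cyc_cochains n (Suc (2 * k))"
    and eq: "(\<lambda>ks. c * u_pow n (Suc k) ks) = cdiff n (Suc (2 * k)) g"
    using assms(2) by auto
  have "c = cycle_eval n (Suc k) (\<lambda>ks. c * u_pow n (Suc k) ks)"
    by (simp only: cycle_eval_scale cycle_eval_u_pow[OF n_gt1] mult_1_right)
  also have "\<dots> = of_nat n * cycle_eval n k (\<lambda>r. g (1 # r))"
    unfolding eq by (rule cycle_eval_cdiff[OF n_gt1 g])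
  finally show ?thesis by (metis dvd_triv_left)
qed

lemma cdiff_sum_first_cocycle:
  assumes "\<eta> \<in> cyc_cochains n (Suc m)" "\<And>ks. cdiff n (Suc m) \<eta> ks = 0"
  shows "cdiff n m (sum_first n m \<eta>) = (\<lambda>ks. of_nat n * \<eta> ks)"
proof
  fix ks
  have "sum_first n (Suc m) (cdiff n (Suc m) \<eta>) ks = 0"
    using assms(2) by (simp add: sum_first_def)
  then show "cdiff n m (sum_first n m \<eta>) ks = of_nat n * \<eta> ks"
    using sum_first_cdiff[OF assms(1), of ks] by simp
qed

lemma cyc_coboundary_u_pow_iff:
  fixes a :: "'r::comm_ring_1"
  assumes n_pos: "0 < n"
  shows "cyc_coboundary n (2 * k) (\<lambda>ks. a * u_pow n k ks) \<longleftrightarrow> (if k = 0 then a = 0 else of_nat n dvd a)"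
proof (cases k)
  case 0
  then show ?thesis by (auto simp: fun_eq_iff dest: spec[of _ "[]"])
next
  case (Suc k')
  have u: "u_pow n (Suc k') \<in> cyc_cochains n (Suc (Suc (2 * k')))"
    using u_pow_cyc_cochains[of n "Suc k'"] by simp
  have "cyc_coboundary n (Suc (Suc (2 * k'))) (\<lambda>ks. a * u_pow n (Suc k') ks) \<longleftrightarrow> of_nat n dvd a"
  proof
    assume coboundary: "cyc_coboundary n (Suc (Suc (2 * k'))) (\<lambda>ks. a * u_pow n (Suc k') ks)"
    show "of_nat n dvd a"
    proof (cases "n = 1")
      case False
      then show ?thesis using u_pow_coboundary_dvd[OF _ coboundary] n_pos by simp
    qed simp
  next
    assume "of_nat n dvd a"
    then obtain d where a: "a = of_nat n * d" by (rule dvdE)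
    have n_times: "cdiff n (Suc (2 * k')) (sum_first n (Suc (2 * k')) (u_pow n (Suc k')))
        = (\<lambda>ks. of_nat n * u_pow n (Suc k') ks)"
      by (rule cdiff_sum_first_cocycle[OF u]) (use cdiff_u_pow[of n "Suc k'"] in simp)
    have "(\<lambda>ks. a * u_pow n (Suc k') ks)
        = (\<lambda>ks. d * cdiff n (Suc (2 * k')) (sum_first n (Suc (2 * k')) (u_pow n (Suc k'))) ks)"
      unfolding n_times a by (simp add: algebra_simps)
    also have "\<dots> = cdiff n (Suc (2 * k')) (\<lambda>l. d * sum_first n (Suc (2 * k')) (u_pow n (Suc k')) l)"
      by (simp add: fun_eq_iff cdiff_scale)
    finally have "(\<lambda>ks. a * u_pow n (Suc k') ks)
        = cdiff n (Suc (2 * k')) (\<lambda>l. d * sum_first n (Suc (2 * k')) (u_pow n (Suc k')) l)" .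
    then show "cyc_coboundary n (Suc (Suc (2 * k'))) (\<lambda>ks. a * u_pow n (Suc k') ks)"
      using cyc_cochains_scale[OF sum_first_cyc_cochains[of n "Suc (2 * k')" "u_pow n (Suc k')"], of d]
      by (simp only: cyc_coboundary.simps) blast
  qed
  then show ?thesis using Suc by simp
qed

section \<open>Cyclic faces and Connes' norm operator\<close>

text \<open>The faces of the cyclic bar construction: the last one multiplies the last entry into
  the first.\<close>

definition cyc_face :: "nat \<Rightarrow> nat \<Rightarrow> nat list \<Rightarrow> nat list" where
  "cyc_face n i x = (if Suc i < length x then take i x @ [(x ! i + x ! Suc i) mod n] @ drop (Suc (Suc i)) x
     else ((last x + hd x) mod n) # butlast (tl x))"

lemma length_cyc_face: "2 \<le> length x \<Longrightarrow> length (cyc_face n i x) = length x - 1"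
  by (auto simp: cyc_face_def)

lemma nth_cyc_face_inner:
  assumes "Suc i < length x" "k < length x - 1"
  shows "cyc_face n i x ! k = (if k < i then x ! k else if k = i then (x ! i + x ! Suc i) mod n else x ! Suc k)"
  using assms by (auto simp: cyc_face_def nth_append min_def)

lemma nth_cyc_face_wrap:
  assumes "2 \<le> length x" "length x \<le> Suc i" "k < length x - 1"
  shows "cyc_face n i x ! k = (if k = 0 then (x ! (length x - 1) + x ! 0) mod n else x ! k)"
proof -
  have ne: "x \<noteq> []" using assms by auto
  show ?thesis
    using assms ne by (cases k) (auto simp: cyc_face_def last_conv_nth hd_conv_nth nth_butlast nth_tl)
qed

lemma cyc_face_rotate1:
  assumes L: "2 \<le> length x" and i: "Suc i < length x"
  shows "cyc_face n i (rotate1 x) = rotate1 (cyc_face n (Suc i) x)"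
proof (rule nth_equalityI)
  show "length (cyc_face n i (rotate1 x)) = length (rotate1 (cyc_face n (Suc i) x))"
    using L by (simp add: length_cyc_face)
next
  fix k assume k: "k < length (cyc_face n i (rotate1 x))"
  then have k': "k < length x - 1" using L by (simp add: length_cyc_face)
  have r1: "rotate1 x ! t = x ! (Suc t mod length x)" if "t < length x" for t
    using that by (rule nth_rotate1)
  have lhs: "cyc_face n i (rotate1 x) ! k = (if k < i then rotate1 x ! k else if k = i then (rotate1 x ! i + rotate1 x ! Suc i) mod n
       else rotate1 x ! Suc k)"
    using nth_cyc_face_inner[of i "rotate1 x" k n] i k' L by simp
  have rhs: "rotate1 (cyc_face n (Suc i) x) ! k = cyc_face n (Suc i) x ! (Suc k mod (length x - 1))"
    using k' L by (simp add: nth_rotate1 length_cyc_face)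
  show "cyc_face n i (rotate1 x) ! k = rotate1 (cyc_face n (Suc i) x) ! k"
  proof (cases "Suc (Suc i) < length x")
    case True
    consider "k < i" | "k = i" | "i < k" "Suc k < length x - 1" | "Suc k = length x - 1" using k' by linarith
    then show ?thesis
    proof cases
      case 1
      then show ?thesis unfolding lhs rhs using nth_cyc_face_inner[OF True, of "Suc k" n] True k' r1[of k] by simp
    next
      case 2
      then show ?thesis unfolding lhs rhs using nth_cyc_face_inner[OF True, of "Suc k" n] True k' r1[of k] r1[of "Suc k"] by simp
    next
      case 3
      then show ?thesis unfolding lhs rhs using nth_cyc_face_inner[OF True, of "Suc k" n] True k' r1[of "Suc k"] by simp
    next
      case 4
      then have "Suc k mod (length x - 1) = 0" by simp
      moreover have "Suc (Suc k) = length x" using 4 L by simp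
      then have "Suc (Suc k) mod length x = 0" by simp
      moreover have "i < k" using 4 True by linarith
      ultimately show ?thesis unfolding lhs rhs using nth_cyc_face_inner[OF True, of 0 n] True 4 r1[of "Suc k"] L by simp
    qed
  next
    case False
    then have e: "length x = Suc (Suc i)" using i by simp
    have w: "cyc_face n (Suc i) x ! t = (if t = 0 then (x ! (length x - 1) + x ! 0) mod n else x ! t)" if "t < length x - 1" for t
      using nth_cyc_face_wrap[OF L, of "Suc i" t n] e that by simp
    consider "k < i" | "k = i" using k' e by linarith
    then show ?thesis
    proof cases
      case 1
      then show ?thesis unfolding lhs rhs using w[of "Suc k"] e r1[of k] by simp
    next
      case 2
      then show ?thesis unfolding lhs rhs using w[of 0] e r1[of k] r1[of "Suc k"] by simp
    qed
  qed
qed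

lemma cyc_face_last_rotate1:
  assumes L: "2 \<le> length x"
  shows "cyc_face n (length x - 1) (rotate1 x) = cyc_face n 0 x"
proof (rule nth_equalityI)
  show "length (cyc_face n (length x - 1) (rotate1 x)) = length (cyc_face n 0 x)"
    using L by (simp add: length_cyc_face)
next
  fix k assume k: "k < length (cyc_face n (length x - 1) (rotate1 x))"
  then have k': "k < length x - 1" using L by (simp add: length_cyc_face)
  have r1: "rotate1 x ! t = x ! (Suc t mod length x)" if "t < length x" for t
    using that by (rule nth_rotate1)
  have w: "cyc_face n (length x - 1) (rotate1 x) ! k = (if k = 0 then (rotate1 x ! (length x - 1) + rotate1 x ! 0) mod n else rotate1 x ! k)"
    using nth_cyc_face_wrap[of "rotate1 x" "length x - 1" k n] L k' by simp
  have d: "cyc_face n 0 x ! k = (if k = 0 then (x ! 0 + x ! 1) mod n else x ! Suc k)"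
    using nth_cyc_face_inner[of 0 x k n] L k' by simp
  show "cyc_face n (length x - 1) (rotate1 x) ! k = cyc_face n 0 x ! k"
  proof -
    have e: "Suc (length x - Suc 0) = length x" using L by simp
    have ne: "x \<noteq> []" using L by auto
    show ?thesis
      unfolding w d using r1[of k] r1[of "length x - 1"] r1[of 0] L k' ne by (simp add: add.commute e)
  qed
qed

lemma cyc_face_rotate:
  assumes L: "2 \<le> length x"
  shows "i + j < length x \<Longrightarrow> cyc_face n i (rotate j x) = rotate j (cyc_face n (i + j) x)"
proof (induction j arbitrary: i)
  case 0 then show ?case by simp
next
  case (Suc j)
  have "cyc_face n i (rotate (Suc j) x) = cyc_face n i (rotate1 (rotate j x))" by simp
  also have "\<dots> = rotate1 (cyc_face n (Suc i) (rotate j x))"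
    by (rule cyc_face_rotate1) (use L Suc.prems in auto)
  also have "cyc_face n (Suc i) (rotate j x) = rotate j (cyc_face n (Suc i + j) x)"
    by (rule Suc.IH) (use Suc.prems in auto)
  finally show ?case by simp
qed

lemma cyc_face_rotate_wrap:
  assumes L: "2 \<le> length x" and i: "i < length x - 1" and j: "j < length x" and c: "length x \<le> i + j"
  shows "cyc_face n i (rotate j x) = rotate (j - 1) (cyc_face n (i + j - length x) x)"
proof -
  define j2 where "j2 = length x - 1 - i"
  define j1 where "j1 = j - j2"
  have j1p: "1 \<le> j1" using c i unfolding j1_def j2_def by linarith
  have jj: "j = j2 + j1" using c i unfolding j1_def j2_def by linarith
  have "cyc_face n i (rotate j x) = cyc_face n i (rotate j2 (rotate j1 x))"
    by (simp add: jj rotate_rotate)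
  also have "\<dots> = rotate j2 (cyc_face n (length x - 1) (rotate j1 x))"
    using cyc_face_rotate[of "rotate j1 x" i j2 n] L i unfolding j2_def by simp
  also have "rotate j1 x = rotate1 (rotate (j1 - 1) x)"
    using j1p by (metis Suc_diff_le diff_Suc_1 rotate_Suc)
  also have "cyc_face n (length x - 1) (rotate1 (rotate (j1 - 1) x)) = cyc_face n 0 (rotate (j1 - 1) x)"
    using cyc_face_last_rotate1[of "rotate (j1 - 1) x" n] L by simp
  also have "\<dots> = rotate (j1 - 1) (cyc_face n (j1 - 1) x)"
    using cyc_face_rotate[OF L, of 0 "j1 - 1" n] jj j by simp
  also have "rotate j2 (rotate (j1 - 1) (cyc_face n (j1 - 1) x)) = rotate (j - 1) (cyc_face n (i + j - length x) x)"
    using jj j1p c i unfolding j2_def by (simp add: rotate_rotate)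
  finally show ?thesis .
qed

text \<open>A face of a rotation of a tuple of length \<open>L\<close> is a rotation of a face; these are the
  index of that face and the amount of rotation.\<close>

definition rot_face_index :: "nat \<Rightarrow> nat \<Rightarrow> nat \<Rightarrow> nat" where
  "rot_face_index L i j = (if i + j < L then i + j else i + j - L)"
definition rot_face_shift :: "nat \<Rightarrow> nat \<Rightarrow> nat \<Rightarrow> nat" where
  "rot_face_shift L i j = (if i + j < L then (if j = L - 1 then 0 else j) else j - 1)"

lemma cyc_face_rotate_eq:
  assumes L: "2 \<le> length x" and i: "i < length x - 1" and j: "j < length x"
  shows "cyc_face n i (rotate j x) = rotate (rot_face_shift (length x) i j) (cyc_face n (rot_face_index (length x) i j) x)"
proof (cases "i + j < length x")
  case True
  have e: "cyc_face n i (rotate j x) = rotate j (cyc_face n (i + j) x)" by (rule cyc_face_rotate[OF L True])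
  show ?thesis
  proof (cases "j = length x - 1")
    case True
    have "rotate j (cyc_face n (i + j) x) = cyc_face n (i + j) x"
      using True L by (intro rotate_id) (simp add: length_cyc_face)
    then show ?thesis using e True \<open>i + j < length x\<close> by (simp add: rot_face_index_def rot_face_shift_def)
  next
    case False
    then show ?thesis using e True by (simp add: rot_face_index_def rot_face_shift_def)
  qed
next
  case False
  then show ?thesis using cyc_face_rotate_wrap[OF L i j] by (simp add: rot_face_index_def rot_face_shift_def)
qed

definition face_sum :: "nat \<Rightarrow> (nat list \<Rightarrow> 'r::comm_ring_1) \<Rightarrow> nat list \<Rightarrow> 'r" where
  "face_sum n F x = (\<Sum>i<length x. (-1) ^ i * F (cyc_face n i x))"

definition inner_face_sum :: "nat \<Rightarrow> (nat list \<Rightarrow> 'r::comm_ring_1) \<Rightarrow> nat list \<Rightarrow> 'r" where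
  "inner_face_sum n F x = (\<Sum>i<length x - 1. (-1) ^ i * F (cyc_face n i x))"

definition cyc_norm :: "(nat list \<Rightarrow> 'r::comm_ring_1) \<Rightarrow> nat list \<Rightarrow> 'r" where
  "cyc_norm F y = (\<Sum>j<length y. (-1) ^ (j * (length y - 1)) * F (rotate j y))"

lemma minus_one_power_add_double: "(-1::'r::comm_ring_1) ^ (a + 2 * b) = (-1) ^ a"
  by (simp add: power_add power_mult)

lemma rot_face_sign:
  assumes L: "2 \<le> L" and i: "i < L - 1" and j: "j < L"
  shows "(-1::'r::comm_ring_1) ^ rot_face_index L i j * (-1) ^ (rot_face_shift L i j * (L - 2)) = (-1) ^ (j * (L - 1)) * (-1) ^ i"
proof -
  obtain L0 where L0: "L = Suc (Suc L0)" using L by (metis add_2_eq_Suc le_Suc_ex)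
  consider "i + j < L" "j \<noteq> L - 1" | "i + j < L" "j = L - 1" | "L \<le> i + j" by linarith
  then show ?thesis
  proof cases
    case 1
    then show ?thesis unfolding rot_face_index_def rot_face_shift_def L0 by (simp add: power_add algebra_simps)
  next
    case 2
    then have i0: "i = 0" and jj: "j = Suc L0" using L0 by auto
    have "(-1::'r) ^ (Suc L0 * Suc L0) = (-1) ^ Suc L0"
      by (simp add: minus_one_power_iff even_mult_iff del: mult_Suc mult_Suc_right)
    then show ?thesis using 2 i0 jj unfolding rot_face_index_def rot_face_shift_def L0 by simp
  next
    case 3
    obtain j0 where j0: "j = Suc j0" using 3 i L0 by (cases j) auto
    obtain t where t: "i + j0 = t + Suc L0" using 3 j0 L0 by (metis add_Suc_right le_add_diff_inverse2 Suc_le_mono add.commute)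
    have s1: "rot_face_index L i j = t" using 3 j0 t L0 by (simp add: rot_face_index_def)
    have s2: "rot_face_shift L i j = j0" using 3 j0 by (simp add: rot_face_shift_def)
    have e: "j * (L - 1) + i = (t + j0 * L0) + 2 * (L0 + 1)"
      using t j0 L0 by (simp add: algebra_simps)
    have "(-1::'r) ^ (j * (L - 1)) * (-1) ^ i = (-1) ^ (j * (L - 1) + i)" by (simp add: power_add)
    also have "\<dots> = (-1) ^ (t + j0 * L0)" unfolding e by (rule minus_one_power_add_double)
    finally have f: "(-1::'r) ^ (j * (L - 1)) * (-1) ^ i = (-1) ^ (t + j0 * L0)" .
    have l2: "L - 2 = L0" using L0 by simp
    show ?thesis unfolding s1 s2 l2 f by (simp add: power_add)
  qed
qed

definition rot_face_inv :: "nat \<Rightarrow> nat \<times> nat \<Rightarrow> nat \<times> nat" where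
  "rot_face_inv L p = (case p of (i', j') \<Rightarrow>
     if j' \<le> i' \<and> \<not> (i' = L - 1 \<and> j' = 0) then (j', i' - j')
     else if i' = L - 1 \<and> j' = 0 then (L - 1, 0) else (j' + 1, i' + L - j' - 1))"

text \<open>Connes' relation \<open>b N = N b'\<close>, by reindexing the double sum along the bijection
  \<open>(j, i) \<mapsto> (rot_face_index L i j, rot_face_shift L i j)\<close>.\<close>

lemma face_sum_cyc_norm:
  fixes F :: "nat list \<Rightarrow> 'r::comm_ring_1"
  assumes L: "2 \<le> length x"
  shows "face_sum n (cyc_norm F) x = cyc_norm (inner_face_sum n F) x"
proof -
  define L where "L = length x"
  have L2: "2 \<le> L" using L unfolding L_def .
  have lhs: "face_sum n (cyc_norm F) x = (\<Sum>(i, j) \<in> {..<L} \<times> {..<L - 1}. (-1) ^ i * (-1) ^ (j * (L - 2)) * F (rotate j (cyc_face n i x)))"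
  proof -
    have "face_sum n (cyc_norm F) x = (\<Sum>i<L. \<Sum>j<L - 1. (-1) ^ i * ((-1) ^ (j * (L - 2)) * F (rotate j (cyc_face n i x))))"
      unfolding face_sum_def cyc_norm_def L_def using L by (simp add: length_cyc_face sum_distrib_left numeral_2_eq_2)
    then show ?thesis by (simp add: sum.cartesian_product mult.assoc)
  qed
  have rhs: "cyc_norm (inner_face_sum n F) x = (\<Sum>(j, i) \<in> {..<L} \<times> {..<L - 1}.
      (-1) ^ (j * (L - 1)) * (-1) ^ i * F (rotate (rot_face_shift L i j) (cyc_face n (rot_face_index L i j) x)))"
  proof -
    have "cyc_norm (inner_face_sum n F) x = (\<Sum>j<L. \<Sum>i<L - 1. (-1) ^ (j * (L - 1)) * ((-1) ^ i * F (cyc_face n i (rotate j x))))"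
      unfolding inner_face_sum_def cyc_norm_def L_def by (simp add: sum_distrib_left)
    also have "\<dots> = (\<Sum>j<L. \<Sum>i<L - 1. (-1) ^ (j * (L - 1)) * ((-1) ^ i * F (rotate (rot_face_shift L i j) (cyc_face n (rot_face_index L i j) x))))"
      by (intro sum.cong refl) (simp add: cyc_face_rotate_eq[OF L] L_def)
    finally show ?thesis by (simp add: sum.cartesian_product mult.assoc)
  qed
  have "(\<Sum>(j, i) \<in> {..<L} \<times> {..<L - 1}.
      (-1) ^ (j * (L - 1)) * (-1) ^ i * F (rotate (rot_face_shift L i j) (cyc_face n (rot_face_index L i j) x)))
     = (\<Sum>(i, j) \<in> {..<L} \<times> {..<L - 1}. (-1) ^ i * (-1) ^ (j * (L - 2)) * F (rotate j (cyc_face n i x)))"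
  proof (rule sum.reindex_bij_witness[where j = "\<lambda>(j, i). (rot_face_index L i j, rot_face_shift L i j)" and i = "rot_face_inv L"])
    fix a assume "a \<in> {..<L} \<times> {..<L - 1}"
    then obtain j i where a: "a = (j, i)" "j < L" "i < L - 1" by auto
    show "rot_face_inv L (case a of (j, i) \<Rightarrow> (rot_face_index L i j, rot_face_shift L i j)) = a"
      using a L2 by (auto simp: rot_face_inv_def rot_face_index_def rot_face_shift_def)
    show "(case a of (j, i) \<Rightarrow> (rot_face_index L i j, rot_face_shift L i j)) \<in> {..<L} \<times> {..<L - 1}"
      using a L2 by (auto simp: rot_face_index_def rot_face_shift_def)
    show "(case (case a of (j, i) \<Rightarrow> (rot_face_index L i j, rot_face_shift L i j)) of (i, j) \<Rightarrow> (-1) ^ i * (-1) ^ (j * (L - 2)) * F (rotate j (cyc_face n i x)))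
        = (case a of (j, i) \<Rightarrow> (-1) ^ (j * (L - 1)) * (-1) ^ i * F (rotate (rot_face_shift L i j) (cyc_face n (rot_face_index L i j) x)))"
      using a rot_face_sign[OF L2 a(3) a(2), where 'r='r] by simp
  next
    fix b assume "b \<in> {..<L} \<times> {..<L - 1}"
    then obtain i' j' where b: "b = (i', j')" "i' < L" "j' < L - 1" by auto
    show "(case rot_face_inv L b of (j, i) \<Rightarrow> (rot_face_index L i j, rot_face_shift L i j)) = b"
      using b L2 by (auto simp: rot_face_inv_def rot_face_index_def rot_face_shift_def)
    show "rot_face_inv L b \<in> {..<L} \<times> {..<L - 1}"
      using b L2 by (auto simp: rot_face_inv_def)
  qed
  then show ?thesis unfolding lhs rhs by simp
qed

definition last_rot_term :: "(nat list \<Rightarrow> 'r::comm_ring_1) \<Rightarrow> nat list \<Rightarrow> 'r" where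
  "last_rot_term F y = (-1) ^ (length y - 1) * F (rotate (length y - 1) y)"

lemma rotate_length_minus_1: "y \<noteq> [] \<Longrightarrow> rotate (length y - 1) y = last y # butlast y"
proof -
  assume y: "y \<noteq> []"
  have "rotate (length (butlast y)) (butlast y @ [last y]) = [last y] @ butlast y"
    by (rule rotate_append)
  then show ?thesis using y by simp
qed

lemma face_sum_Cons_0:
  fixes F :: "nat list \<Rightarrow> 'r::comm_ring_1"
  assumes L: "1 \<le> length y" and yn: "set y \<subseteq> {..<n}"
  shows "face_sum n F (0 # y) = F y - inner_face_sum n (\<lambda>z. F (0 # z)) y - last_rot_term F y"
proof -
  obtain L1 where L1: "length y = Suc L1" using L by (metis Suc_le_D One_nat_def)
  have y: "y \<noteq> []" using L1 by auto
  have d0: "cyc_face n 0 (0 # y) = y"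
  proof -
    have "hd y < n" using yn y by (cases y) auto
    then show ?thesis using y L1 by (cases y) (auto simp: cyc_face_def)
  qed
  have dS: "cyc_face n (Suc i) (0 # y) = 0 # cyc_face n i y" if "i < L1" for i
    using that L1 by (simp add: cyc_face_def)
  have dL: "cyc_face n (Suc L1) (0 # y) = rotate L1 y"
  proof -
    have "last y < n" using yn y last_in_set by blast
    then show ?thesis using rotate_length_minus_1[OF y] L1 y by (simp add: cyc_face_def)
  qed
  have "face_sum n F (0 # y) = F (cyc_face n 0 (0 # y)) + (\<Sum>i<L1. (-1) ^ Suc i * F (cyc_face n (Suc i) (0 # y)))
        + (-1) ^ Suc L1 * F (cyc_face n (Suc L1) (0 # y))"
  proof -
    have sp: "(\<Sum>i<Suc (Suc L1). f i) = f 0 + (\<Sum>i<L1. f (Suc i)) + f (Suc L1)" for f :: "nat \<Rightarrow> 'r"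
    proof -
      have "(\<Sum>i<Suc (Suc L1). f i) = f 0 + (\<Sum>i<Suc L1. f (Suc i))" by (rule sum.lessThan_Suc_shift)
      also have "(\<Sum>i<Suc L1. f (Suc i)) = (\<Sum>i<L1. f (Suc i)) + f (Suc L1)" by (rule sum.lessThan_Suc)
      finally show ?thesis by (simp add: add.assoc)
    qed
    show ?thesis unfolding face_sum_def using L1 sp[of "\<lambda>i. (-1) ^ i * F (cyc_face n i (0 # y))"] by simp
  qed
  also have "\<dots> = F y - (\<Sum>i<L1. (-1) ^ i * F (0 # cyc_face n i y)) - (-1) ^ L1 * F (rotate L1 y)"
    using d0 dS dL by (simp add: sum_negf)
  also have "(\<Sum>i<L1. (-1) ^ i * F (0 # cyc_face n i y)) = inner_face_sum n (\<lambda>z. F (0 # z)) y"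
    unfolding inner_face_sum_def using L1 by simp
  also have "(-1) ^ L1 * F (rotate L1 y) = last_rot_term F y"
    unfolding last_rot_term_def using L1 by simp
  finally show ?thesis .
qed

lemma cyc_norm_last_rot_term:
  fixes F :: "nat list \<Rightarrow> 'r::comm_ring_1"
  assumes L: "1 \<le> length y"
  shows "cyc_norm (last_rot_term F) y = cyc_norm F y"
proof -
  define L where "L = length y"
  have L1: "1 \<le> L" using L unfolding L_def .
  define g where "g k = (-1) ^ (k * (L - 1)) * F (rotate k y)" for k
  have "cyc_norm (last_rot_term F) y = (\<Sum>j<L. g ((j + (L - 1)) mod L))"
  proof (unfold cyc_norm_def last_rot_term_def L_def[symmetric], rule sum.cong[OF refl])
    fix j assume j: "j \<in> {..<L}"
    have r: "rotate (L - 1) (rotate j y) = rotate ((j + (L - 1)) mod L) y"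
      unfolding rotate_rotate L_def by (metis add.commute rotate_conv_mod)
    have s: "(-1::'r) ^ (j * (L - 1)) * (-1) ^ (L - 1) = (-1) ^ ((j + (L - 1)) mod L * (L - 1))"
    proof (cases j)
      case 0
      have "(L - 1) mod L = L - 1" using L1 by simp
      then show ?thesis using 0 by (simp add: minus_one_power_iff even_mult_iff)
    next
      case (Suc j0)
      have "(j + (L - 1)) mod L = j0" using j Suc L1 by (simp add: mod_less_double)
      have e: "j * (L - 1) + (L - 1) = j0 * (L - 1) + 2 * (L - 1)"
      proof -
        obtain L' where "L = Suc L'" using L1 by (metis Suc_le_D One_nat_def)
        then show ?thesis using Suc by (simp add: algebra_simps)
      qed
      have "(-1::'r) ^ (j * (L - 1)) * (-1) ^ (L - 1) = (-1) ^ (j * (L - 1) + (L - 1))" by (simp add: power_add)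
      also have "\<dots> = (-1) ^ (j0 * (L - 1) + 2 * (L - 1))" unfolding e ..
      also have "\<dots> = (-1) ^ (j0 * (L - 1))" by (rule minus_one_power_add_double)
      finally show ?thesis using \<open>(j + (L - 1)) mod L = j0\<close> by simp
    qed
    show "(-1) ^ (j * (L - 1)) * ((-1) ^ (length (rotate j y) - 1) * F (rotate (length (rotate j y) - 1) (rotate j y)))
        = g ((j + (L - 1)) mod L)"
      unfolding g_def using r s by (simp add: L_def mult.assoc[symmetric])
  qed
  also have "\<dots> = (\<Sum>j<L. g j)" by (rule sum_lessThan_shift_mod)
  also have "\<dots> = cyc_norm F y" unfolding g_def cyc_norm_def L_def ..
  finally show ?thesis .
qed

lemma cyc_norm_cong: "(\<And>j. j < length y \<Longrightarrow> F (rotate j y) = G (rotate j y)) \<Longrightarrow> cyc_norm F y = cyc_norm G y"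
  unfolding cyc_norm_def by (rule sum.cong) auto

lemma cyc_norm_diff: "cyc_norm (\<lambda>z. F z - G z) y = cyc_norm F y - cyc_norm G y"
  unfolding cyc_norm_def by (simp add: sum_subtractf algebra_simps)

lemma cyc_norm_face_sum_Cons_0:
  fixes F :: "nat list \<Rightarrow> 'r::comm_ring_1"
  assumes L: "2 \<le> length y" and yn: "set y \<subseteq> {..<n}"
  shows "cyc_norm (\<lambda>z. face_sum n F (0 # z)) y = - face_sum n (cyc_norm (\<lambda>z. F (0 # z))) y"
proof -
  have "cyc_norm (\<lambda>z. face_sum n F (0 # z)) y = cyc_norm (\<lambda>z. F z - inner_face_sum n (\<lambda>z. F (0 # z)) z - last_rot_term F z) y"
    by (rule cyc_norm_cong, rule face_sum_Cons_0) (use L yn in auto)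
  also have "\<dots> = cyc_norm F y - cyc_norm (inner_face_sum n (\<lambda>z. F (0 # z))) y - cyc_norm (last_rot_term F) y"
    by (simp add: cyc_norm_diff)
  also have "cyc_norm (last_rot_term F) y = cyc_norm F y" by (rule cyc_norm_last_rot_term) (use L in auto)
  also have "cyc_norm (inner_face_sum n (\<lambda>z. F (0 # z))) y = face_sum n (cyc_norm (\<lambda>z. F (0 # z))) y"
    by (rule face_sum_cyc_norm[symmetric, OF L])
  finally show ?thesis by simp
qed

text \<open>Tradler's formula in one coordinate: pairing with \<open>1\<close> keeps only the basis element
  \<open>\<sigma>\<^sup>h\<close> that makes the total exponent \<open>0\<close>, so \<open>\<Delta>\<close> becomes the norm operator applied at
  \<open>(h, k\<^sub>1, \<dots>, k\<^sub>m)\<close>.\<close>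

definition compl_index :: "nat \<Rightarrow> nat \<Rightarrow> nat list \<Rightarrow> nat" where
  "compl_index n t ks = (n - (t + sum_list ks) mod n) mod n"

definition cdelta :: "nat \<Rightarrow> nat \<Rightarrow> nat \<Rightarrow> (nat list \<Rightarrow> 'r::comm_ring_1) \<Rightarrow> nat list \<Rightarrow> 'r" where
  "cdelta n m t \<psi> ks = (if valid_idx n m ks then cyc_norm \<psi> (compl_index n t ks # ks) else 0)"

lemma cdelta_cyc_cochains: "cdelta n m t \<psi> \<in> cyc_cochains n m"
  by (rule cyc_cochainsI) (simp add: cdelta_def)

lemma compl_index_less: "0 < n \<Longrightarrow> compl_index n t ks < n"
  by (simp add: compl_index_def)

lemma compl_index_sum: "0 < n \<Longrightarrow> (compl_index n t ks + t + sum_list ks) mod n = 0"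
proof -
  assume n: "0 < n"
  define a where "a = (t + sum_list ks) mod n"
  have a: "a < n" using n by (simp add: a_def)
  have "(compl_index n t ks + t + sum_list ks) mod n = ((n - a) mod n + (t + sum_list ks)) mod n"
    by (simp add: compl_index_def a_def add.assoc)
  also have "\<dots> = ((n - a) + a) mod n" by (metis a_def mod_add_eq mod_mod_trivial)
  also have "\<dots> = 0" using a by simp
  finally show ?thesis .
qed

lemma compl_index_unique:
  assumes n: "0 < n" and h: "h < n" and e: "(h + t + s) mod n = 0"
  shows "h = compl_index n t (ks :: nat list) \<or> sum_list ks \<noteq> s"
proof (cases "sum_list ks = s")
  case True
  have e2: "(compl_index n t ks + t + s) mod n = 0" using compl_index_sum[OF n, of t ks] True by simp
  have "(h + (t + s)) mod n = (compl_index n t ks + (t + s)) mod n" using e e2 by (simp add: add.assoc)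
  then have "h mod n = compl_index n t ks mod n" by (rule mod_add_right_cancel)
  then show ?thesis using h compl_index_less[OF n, of t ks] by simp
qed simp

lemma sum_list_split_pair:
  "Suc i < length x \<Longrightarrow> sum_list x = sum_list (take i x) + (x ! i + x ! Suc i) + sum_list (drop (Suc (Suc i)) x)"
proof -
  assume a: "Suc i < length x"
  have "x = take i x @ drop i x" by simp
  moreover have "drop i x = x ! i # x ! Suc i # drop (Suc (Suc i)) x"
    using a by (metis Cons_nth_drop_Suc Suc_lessD)
  ultimately have "sum_list x = sum_list (take i x) + sum_list (x ! i # x ! Suc i # drop (Suc (Suc i)) x)"
    by (metis sum_list_append)
  then show ?thesis by (simp add: add.assoc)
qed

lemma mod_add_mod_middle: "(a + b mod n + c) mod n = (a + b + c) mod (n::nat)"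
  by (metis mod_add_left_eq mod_add_right_eq)
lemma mod_add_mod_left: "(b mod n + c) mod n = (b + c) mod (n::nat)"
  by (simp add: mod_add_left_eq)

lemma sum_list_cyc_face_mod:
  assumes L: "2 \<le> length x"
  shows "sum_list (cyc_face n i x) mod n = sum_list x mod n"
proof (cases "Suc i < length x")
  case True
  have "sum_list (cyc_face n i x) = sum_list (take i x) + (x ! i + x ! Suc i) mod n + sum_list (drop (Suc (Suc i)) x)"
    using True by (simp add: cyc_face_def)
  then show ?thesis using sum_list_split_pair[OF True] by (simp add: mod_add_mod_middle)
next
  case False
  obtain a y where xy: "x = a # y" using L by (cases x) auto
  have y: "y \<noteq> []" using L xy by auto
  define zs where "zs = butlast y"
  define b where "b = last y"
  have x: "x = a # zs @ [b]" using xy y by (simp add: zs_def b_def)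
  have "sum_list (cyc_face n i x) = (b + a) mod n + sum_list zs" using False x by (simp add: cyc_face_def)
  moreover have "sum_list x = (b + a) + sum_list zs" using x by simp
  ultimately show ?thesis by (simp add: mod_add_mod_left)
qed

lemma set_cyc_face:
  assumes "set x \<subseteq> {..<n}" "0 < n" "2 \<le> length x"
  shows "set (cyc_face n i x) \<subseteq> {..<n}"
proof (cases "Suc i < length x")
  case True
  then show ?thesis using assms by (auto simp: cyc_face_def dest: in_set_takeD in_set_dropD)
next
  case False
  have "set (butlast (tl x)) \<subseteq> set x"
    by (cases x) (auto dest: in_set_butlastD)
  then show ?thesis using False assms by (auto simp: cyc_face_def)
qed

lemma tl_cyc_face_Cons:
  assumes "ks \<noteq> []"
  shows "tl (cyc_face n i (a # ks)) = tl (cyc_face n i (b # ks))"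
  using assms by (cases i) (auto simp: cyc_face_def)

text \<open>Prepending the exponent \<open>0\<close> of the unit turns the cyclic faces into the faces of the bar
  differential.\<close>

lemma cdiff_expr_face_sum:
  assumes l: "length z = Suc m" and zn: "set z \<subseteq> {..<n}"
  shows "cdiff_expr n m \<psi> z = face_sum n (\<lambda>x. \<psi> (tl x)) (0 # z)"
proof -
  have z: "z \<noteq> []" using l by auto
  have sp: "(\<Sum>i<Suc (Suc m). f i) = f 0 + (\<Sum>i\<in>{1..m}. f i) + f (Suc m)" for f :: "nat \<Rightarrow> 'b::comm_monoid_add"
  proof -
    have "(\<Sum>i<Suc (Suc m). f i) = f 0 + (\<Sum>i<Suc m. f (Suc i))" by (rule sum.lessThan_Suc_shift)
    also have "(\<Sum>i<Suc m. f (Suc i)) = (\<Sum>i<m. f (Suc i)) + f (Suc m)" by (rule sum.lessThan_Suc)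
    also have "(\<Sum>i<m. f (Suc i)) = (\<Sum>i\<in>{1..m}. f i)"
      by (rule sum.reindex_bij_witness[where i = "\<lambda>i. i - 1" and j = Suc]) auto
    finally show ?thesis by (simp add: add.assoc)
  qed
  have d0: "tl (cyc_face n 0 (0 # z)) = tl z" using l by (cases z) (auto simp: cyc_face_def)
  have dm: "tl (cyc_face n i (0 # z)) = merge_at n z i" if "i \<in> {1..m}" for i
    using that l by (cases i) (auto simp: cyc_face_def merge_at_def)
  have dl: "tl (cyc_face n (Suc m) (0 # z)) = butlast z" using l by (simp add: cyc_face_def)
  have ms: "(\<Sum>i\<in>{1..m}. (-1) ^ i * \<psi> (tl (cyc_face n i (0 # z)))) = (\<Sum>i\<in>{1..m}. (-1) ^ i * \<psi> (merge_at n z i))"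
    by (rule sum.cong) (simp_all add: dm)
  have "face_sum n (\<lambda>x. \<psi> (tl x)) (0 # z) = (\<Sum>i<Suc (Suc m). (-1) ^ i * \<psi> (tl (cyc_face n i (0 # z))))"
    unfolding face_sum_def using l by simp
  also have "\<dots> = \<psi> (tl z) + (\<Sum>i\<in>{1..m}. (-1) ^ i * \<psi> (merge_at n z i)) + (-1) ^ Suc m * \<psi> (butlast z)"
    unfolding sp ms d0 dl by simp
  finally show ?thesis unfolding cdiff_expr_def by simp
qed

lemma cyc_norm_zero_entry: "\<psi> \<in> cyc_cochains n m' \<Longrightarrow> 0 \<in> set y \<Longrightarrow> cyc_norm \<psi> y = 0"
  unfolding cyc_norm_def by (rule sum.neutral) (simp add: cyc_cochains_zero_entry)

lemma cyc_norm_Cons_compl: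
  assumes n: "0 < n" and C: "\<psi> \<in> cyc_cochains n (Suc m)" and h: "h < n"
    and e: "(h + t + sum_list b) mod n = 0" and lb: "length b = m" and bn: "set b \<subseteq> {..<n}"
  shows "cyc_norm \<psi> (h # b) = cdelta n m t \<psi> b"
proof (cases "valid_idx n m b")
  case True
  have "h = compl_index n t b" using compl_index_unique[OF n h e, of b] by simp
  then show ?thesis using True by (simp add: cdelta_def)
next
  case False
  then have "0 \<in> set b" using lb bn by (auto simp: valid_idx_def subset_iff Suc_le_eq)
  then have "cyc_norm \<psi> (h # b) = 0" by (intro cyc_norm_zero_entry[OF C]) simp
  then show ?thesis using False by (simp add: cdelta_def)
qed

lemma cyc_norm_cyc_face_compl:
  assumes n: "0 < n" and \<psi>: "\<psi> \<in> cyc_cochains n (Suc m)" and v: "valid_idx n (Suc m) ks"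
  shows "cyc_norm \<psi> (cyc_face n i (compl_index n t ks # ks)) = cdelta n m t \<psi> (tl (cyc_face n i (0 # ks)))"
proof -
  let ?g = "compl_index n t ks"
  have gks: "set (?g # ks) \<subseteq> {..<n}" and lg: "length (?g # ks) = Suc (Suc m)"
    using compl_index_less[OF n] valid_idxD[OF v] by auto
  define d where "d = cyc_face n i (?g # ks)"
  have ld: "length d = Suc m" unfolding d_def using lg by (simp add: length_cyc_face)
  have sd: "set d \<subseteq> {..<n}" unfolding d_def by (rule set_cyc_face[OF gks n]) (use lg in simp)
  then obtain h r where d: "d = h # r" and h: "h < n" and r: "set r \<subseteq> {..<n}"
    using ld by (cases d) auto
  have "(h + t + sum_list r) mod n = (t + sum_list d) mod n"
    by (simp add: d add_ac)
  also have "\<dots> = (t + (?g + sum_list ks)) mod n"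
  proof -
    have "sum_list d mod n = (?g + sum_list ks) mod n"
      using sum_list_cyc_face_mod[of "?g # ks" n i] lg unfolding d_def by simp
    then show ?thesis by (metis mod_add_right_eq)
  qed
  also have "\<dots> = 0" using compl_index_sum[OF n, of t ks] by (simp add: add_ac)
  finally have "cyc_norm \<psi> (h # r) = cdelta n m t \<psi> r"
    by (rule cyc_norm_Cons_compl[OF n \<psi> h]) (use ld d r in auto)
  moreover have "tl (cyc_face n i (0 # ks)) = r"
  proof -
    have "ks \<noteq> []" using valid_idxD(1)[OF v] by auto
    then show ?thesis using tl_cyc_face_Cons[of ks n i 0 ?g] d unfolding d_def by simp
  qed
  ultimately show ?thesis by (simp add: d_def[symmetric] d)
qed

text \<open>\<open>\<Delta>\<close> anticommutes with the differential: the norm operator turns the alternating sum of all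
  cyclic faces into minus the sum of the inner faces, which is the differential again.\<close>

lemma cdelta_cdiff:
  assumes n: "0 < n" and \<psi>: "\<psi> \<in> cyc_cochains n (Suc m)"
  shows "cdelta n (Suc m) t (cdiff n (Suc m) \<psi>) ks = - cdiff n m (cdelta n m t \<psi>) ks"
proof (cases "valid_idx n (Suc m) ks")
  case False
  then show ?thesis by (simp add: cdelta_def cdiff_def)
next
  case True
  note v = valid_idxD[OF True]
  let ?g = "compl_index n t ks"
  have gks: "set (?g # ks) \<subseteq> {..<n}" and lg: "length (?g # ks) = Suc (Suc m)"
    using compl_index_less[OF n] v by auto
  have "cdelta n (Suc m) t (cdiff n (Suc m) \<psi>) ks = cyc_norm (cdiff n (Suc m) \<psi>) (?g # ks)"
    using True by (simp add: cdelta_def)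
  also have "\<dots> = cyc_norm (\<lambda>z. face_sum n (\<lambda>x. \<psi> (tl x)) (0 # z)) (?g # ks)"
  proof (rule cyc_norm_cong)
    fix j
    have "length (rotate j (?g # ks)) = Suc (Suc m)" "set (rotate j (?g # ks)) \<subseteq> {..<n}"
      using lg gks by simp_all
    then show "cdiff n (Suc m) \<psi> (rotate j (?g # ks)) = face_sum n (\<lambda>x. \<psi> (tl x)) (0 # rotate j (?g # ks))"
      using cdiff_expr_eq_cdiff[OF \<psi>, of "rotate j (?g # ks)"]
        cdiff_expr_face_sum[of "rotate j (?g # ks)" "Suc m" n \<psi>] by simp
  qed
  also have "\<dots> = - face_sum n (cyc_norm \<psi>) (?g # ks)"
    using cyc_norm_face_sum_Cons_0[of "?g # ks" n "\<lambda>x. \<psi> (tl x)"] lg gks by simp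
  also have "face_sum n (cyc_norm \<psi>) (?g # ks) = face_sum n (\<lambda>x. cdelta n m t \<psi> (tl x)) (0 # ks)"
    unfolding face_sum_def by (simp add: cyc_norm_cyc_face_compl[OF n \<psi> True])
  also have "\<dots> = cdiff n m (cdelta n m t \<psi>) ks"
    using cdiff_expr_face_sum[of ks m n "cdelta n m t \<psi>"]
      cdiff_expr_eq_cdiff[OF cdelta_cyc_cochains[of n m t \<psi>], of ks] v by simp
  finally show ?thesis .
qed

lemma cdelta_zero: "cdelta n m t (\<lambda>_. (0::'r::comm_ring_1)) = (\<lambda>_. 0)"
  by (simp add: fun_eq_iff cdelta_def cyc_norm_def)

lemma cdelta_cocycle_coboundary:
  fixes \<phi> :: "nat list \<Rightarrow> 'r::idom"
  assumes n_pos: "0 < n" and n_nonzero: "of_nat n \<noteq> (0::'r)"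
    and \<phi>: "\<phi> \<in> cyc_cochains n (Suc m)" and cocycle: "\<And>ks. cdiff n (Suc m) \<phi> ks = 0"
  shows "cyc_coboundary n m (cdelta n m t \<phi>)"
proof (cases m)
  case 0
  then have "\<phi> = (\<lambda>_. 0)"
    using deg1_cocycle_zero[OF n_pos n_nonzero] \<phi> cocycle by simp
  then show ?thesis using 0 by (simp add: cdelta_zero)
next
  case (Suc m')
  show ?thesis
  proof (cases "even m")
    case False
    then obtain j where m: "m = Suc (2 * j)" by (metis oddE Suc_eq_plus1)
    have "cdiff n (Suc m) \<phi> = (\<lambda>_. 0)"
      using cocycle by (simp add: fun_eq_iff)
    then have "cdelta n (Suc m) t (cdiff n (Suc m) \<phi>) = (\<lambda>_. 0)"
      by (simp add: cdelta_zero)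
    then have "cdiff n m (cdelta n m t \<phi>) ks = 0" for ks
      using cdelta_cdiff[OF n_pos \<phi>, of t ks] by simp
    then have "cyc_coboundary n (Suc (2 * j)) (cdelta n m t \<phi>)"
      using odd_cocycle_coboundary[OF n_pos n_nonzero, of "cdelta n m t \<phi>" j]
        cdelta_cyc_cochains[of n m t \<phi>] m by simp
    then show ?thesis using m by simp
  next
    case True
    then obtain i where "m = 2 * i" by blast
    with Suc obtain j where m: "m = Suc (Suc (2 * j))" by (cases i) auto
    have "cyc_coboundary n (Suc m) \<phi>"
      using odd_cocycle_coboundary[OF n_pos n_nonzero, of \<phi> "Suc j"] \<phi> cocycle m by simp
    then obtain \<theta> where \<theta>: "\<theta> \<in> cyc_cochains n (Suc m')" and \<phi>_eq: "\<phi> = cdiff n (Suc m') \<theta>"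
      using Suc by auto
    have "cdelta n m t \<phi> = cdiff n m' (\<lambda>l. - cdelta n m' t \<theta> l)"
      unfolding \<phi>_eq using Suc by (simp add: fun_eq_iff cdelta_cdiff[OF n_pos \<theta>] cdiff_uminus)
    then show ?thesis
      using Suc cyc_cochains_uminus[OF cdelta_cyc_cochains[of n m' t \<theta>]] by auto
  qed
qed

section \<open>Hochschild cochains in coordinates\<close>

lemma mod_add_eq_iff:
  "j < n \<Longrightarrow> a < n \<Longrightarrow> s < (n::nat) \<Longrightarrow> ((a + j) mod n = s) = (j = (s + n - a) mod n)"
  by (subst mod_less_double, linarith, subst mod_less_double, linarith, auto)

lemma mod_add_sub_inverse: "s < (n::nat) \<Longrightarrow> ((s + n - b mod n) mod n + b) mod n = s"
proof -
  assume s: "s < n"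
  then have n: "0 < n" by simp
  have r: "b mod n < n" using n by simp
  have "((s + n - b mod n) mod n + b) mod n = ((s + n - b mod n) + b mod n) mod n"
    by (metis mod_add_eq mod_mod_trivial)
  also have "(s + n - b mod n) + b mod n = s + n" using r by simp
  finally show ?thesis using s by simp
qed

lemma mod_sub_add_inverse: "t < (n::nat) \<Longrightarrow> ((t + b) mod n + n - b mod n) mod n = t"
proof -
  assume t: "t < n"
  have "(((t + b) mod n + n - b mod n) mod n + b) mod n = (t + b) mod n"
    using mod_add_sub_inverse[of "(t + b) mod n" n b] t by simp
  then have "((t + b) mod n + n - b mod n) mod n mod n = t mod n"
    by (rule mod_add_right_cancel)
  then show ?thesis using t by simp
qed

lemma sum_lessThan_mod_delta:
  assumes s: "s < n" and a: "a < (n::nat)"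
  shows "(\<Sum>j<n. if (a + j) mod n = s then h j else 0) = h ((s + n - a) mod n)"
proof -
  have "(\<Sum>j<n. if (a + j) mod n = s then h j else 0) = (\<Sum>j<n. if j = (s + n - a) mod n then h j else 0)"
    by (rule sum.cong[OF refl]) (use mod_add_eq_iff[OF _ a s] in auto)
  also have "\<dots> = h ((s + n - a) mod n)" using s by (simp add: sum.delta)
  finally show ?thesis .
qed

lemma gmult_sig_left:
  assumes s: "s < n"
  shows "gmult n (sig n a) h s = h ((s + n - a mod n) mod n)"
proof -
  have n: "0 < n" using s by simp
  have "gmult n (sig n a) h s = (\<Sum>i<n. \<Sum>j<n. if (i + j) mod n = s then sig n a i * h j else 0)"
    using s by (simp add: gmult_def)
  also have "\<dots> = (\<Sum>i<n. if i = a mod n then (\<Sum>j<n. if (i + j) mod n = s then h j else 0) else 0)"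
    by (rule sum.cong[OF refl]) (simp add: sig_def cong: if_cong)
  also have "\<dots> = (\<Sum>j<n. if (a mod n + j) mod n = s then h j else 0)"
    using n by (simp add: sum.delta)
  also have "\<dots> = h ((s + n - a mod n) mod n)" by (rule sum_lessThan_mod_delta[OF s]) (use n in simp)
  finally show ?thesis .
qed

lemma gmult_sig_right:
  assumes s: "s < n"
  shows "gmult n g (sig n a) s = g ((s + n - a mod n) mod n)"
proof -
  have n: "0 < n" using s by simp
  have "gmult n g (sig n a) s = (\<Sum>i<n. \<Sum>j<n. if (i + j) mod n = s then g i * sig n a j else 0)"
    using s by (simp add: gmult_def)
  also have "\<dots> = (\<Sum>i<n. \<Sum>j<n. if j = a mod n then (if (i + j) mod n = s then g i else 0) else 0)"
    by (intro sum.cong refl) (simp add: sig_def cong: if_cong)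
  also have "\<dots> = (\<Sum>i<n. if (a mod n + i) mod n = s then g i else 0)"
    using n by (simp add: sum.delta) (simp add: add.commute)
  also have "\<dots> = g ((s + n - a mod n) mod n)" by (rule sum_lessThan_mod_delta[OF s]) (use n in simp)
  finally show ?thesis .
qed

lemma gmult_sig_sig: assumes n0: "0 < n" shows "gmult n (sig n a) (sig n b) = (sig n (a + b) :: nat \<Rightarrow> 'r::comm_ring_1)"
proof
  fix s
  show "gmult n (sig n a) (sig n b) s = (sig n (a + b) s :: 'r)"
  proof (cases "s < n")
    case False
    have "(a + b) mod n < n" using n0 by simp
    then have "s \<noteq> (a + b) mod n" using False by linarith
    then show ?thesis using False by (simp add: gmult_def sig_def)
  next
    case True
    then have n: "0 < n" by simp
    have "gmult n (sig n a) (sig n b) s = (sig n b ((s + n - a mod n) mod n) :: 'r)" by (rule gmult_sig_left[OF True])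
    also have "\<dots> = (if b mod n = (s + n - a mod n) mod n then 1 else 0)" by (auto simp: sig_def)
    also have "(b mod n = (s + n - a mod n) mod n) = ((a mod n + b mod n) mod n = s)"
      using mod_add_eq_iff[of "b mod n" n "a mod n" s] True n by simp
    also have "(a mod n + b mod n) mod n = (a + b) mod n" by (simp add: mod_add_eq)
    finally show ?thesis by (auto simp: sig_def)
  qed
qed

lemma gmult_scale_l: "gmult n (\<lambda>t. c * g t) h = (\<lambda>t. c * gmult n g h t)"
  by (rule ext) (simp add: gmult_def sum_distrib_left mult.assoc if_distrib cong: if_cong)

lemma gmult_zero_left [simp]: "gmult n (\<lambda>t. 0) h = (\<lambda>t. 0)"
  by (rule ext) (simp add: gmult_def cong: if_cong)

text \<open>The coordinate \<open>t\<close> of a Hochschild cochain: the coefficient of \<open>\<sigma>\<^sup>t\<close> times the product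
  of the arguments.\<close>

definition coord :: "nat \<Rightarrow> (nat list \<Rightarrow> nat \<Rightarrow> 'r::comm_ring_1) \<Rightarrow> nat \<Rightarrow> nat list \<Rightarrow> 'r" where
  "coord n f t = (\<lambda>ks. f ks ((t + sum_list ks) mod n))"

definition supported_below :: "nat \<Rightarrow> (nat list \<Rightarrow> nat \<Rightarrow> 'r::comm_ring_1) \<Rightarrow> bool" where
  "supported_below n F \<longleftrightarrow> (\<forall>ks s. n \<le> s \<longrightarrow> F ks s = 0)"

lemma coord_eqI:
  assumes n: "0 < n" and F: "supported_below n F" and G: "supported_below n G"
    and e: "\<And>t ks. t < n \<Longrightarrow> coord n F t ks = coord n G t ks"
  shows "F = G"
proof (intro ext)
  fix ks s
  show "F ks s = G ks s"
  proof (cases "s < n")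
    case False then show ?thesis using F G by (simp add: supported_below_def)
  next
    case True
    define t where "t = (s + n - sum_list ks mod n) mod n"
    have t: "t < n" using n by (simp add: t_def)
    have "(t + sum_list ks) mod n = s" unfolding t_def by (rule mod_add_sub_inverse[OF True])
    then show ?thesis using e[OF t, of ks] by (simp add: coord_def)
  qed
qed

definition of_coords :: "nat \<Rightarrow> (nat \<Rightarrow> nat list \<Rightarrow> 'r::comm_ring_1) \<Rightarrow> nat list \<Rightarrow> nat \<Rightarrow> 'r" where
  "of_coords n \<theta> = (\<lambda>ks s. if s < n then \<theta> ((s + n - sum_list ks mod n) mod n) ks else 0)"

lemma coord_of_coords: "t < n \<Longrightarrow> coord n (of_coords n \<theta>) t ks = \<theta> t ks"
  by (simp add: coord_def of_coords_def mod_sub_add_inverse)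

lemma of_coords_cochains:
  assumes "\<And>t. t < n \<Longrightarrow> \<theta> t \<in> cyc_cochains n m"
  shows "of_coords n \<theta> \<in> cochains n m"
proof -
  have "\<theta> ((s + n - sum_list ks mod n) mod n) ks = 0" if "\<not> valid_idx n m ks" "s < n" for ks s
    using that by (intro cyc_cochainsD[OF assms]) simp_all
  then show ?thesis by (auto simp: cochains_def gring_def of_coords_def fun_eq_iff)
qed

lemma cochainsD:
  assumes "f \<in> cochains n m"
  shows "\<And>ks s. n \<le> s \<Longrightarrow> f ks s = 0" "\<And>ks. \<not> valid_idx n m ks \<Longrightarrow> f ks = (\<lambda>_. 0)"
  using assms by (auto simp: cochains_def gring_def)

lemma coord_cyc_cochains: "f \<in> cochains n m \<Longrightarrow> coord n f t \<in> cyc_cochains n m"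
  by (rule cyc_cochainsI) (simp add: coord_def cochainsD)

lemma cochains_supported_below: "f \<in> cochains n m \<Longrightarrow> supported_below n f"
  by (simp add: supported_below_def cochainsD)

lemma mod_sub_head: "a < (n::nat) \<Longrightarrow> ((t + (a + b)) mod n + n - a) mod n = (t + b) mod n"
proof -
  assume a: "a < n"
  have "((t + b) mod n + a) mod n = (t + (a + b)) mod n" by (simp only: mod_add_left_eq) (simp add: add_ac)
  then have "(t + (a + b)) mod n = ((t + b) mod n + a) mod n" by simp
  then have "((t + (a + b)) mod n + n - a) mod n = (((t + b) mod n + a) mod n + n - a mod n) mod n"
    using a by simp
  also have "\<dots> = (t + b) mod n" using a by (intro mod_sub_add_inverse) simp
  finally show ?thesis .
qed

lemma merge_at_eq_cyc_face: "1 \<le> i \<Longrightarrow> i < length ks \<Longrightarrow> merge_at n ks i = cyc_face n (i - 1) ks"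
  by (simp add: merge_at_def cyc_face_def)

lemma sum_list_merge_at_mod: "1 \<le> i \<Longrightarrow> i < length ks \<Longrightarrow> sum_list (merge_at n ks i) mod n = sum_list ks mod n"
  using sum_list_cyc_face_mod[of ks n "i - 1"] by (simp add: merge_at_eq_cyc_face)

lemma gmult_sig_coord:
  assumes "t < n" "a < n"
  shows "gmult n (sig n a) (f ks) ((t + (a + sum_list ks)) mod n) = coord n f t ks"
  using gmult_sig_left[of "(t + (a + sum_list ks)) mod n" n a "f ks"] assms
  by (simp add: coord_def mod_sub_head)

lemma gmult_coord_sig:
  assumes "t < n" "a < n"
  shows "gmult n (f ks) (sig n a) ((t + (a + sum_list ks)) mod n) = coord n f t ks"
  using gmult_sig_right[of "(t + (a + sum_list ks)) mod n" n "f ks" a] assms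
  by (simp add: coord_def mod_sub_head)

lemma coord_hdiff:
  assumes f: "f \<in> cochains n m" and t: "t < n"
  shows "coord n (hdiff n m f) t ks = cdiff n m (coord n f t) ks"
proof (cases "valid_idx n (Suc m) ks")
  case False
  then show ?thesis by (simp add: coord_def hdiff_def cdiff_def)
next
  case True
  note v = valid_idxD[OF True]
  have n: "0 < n" using t by simp
  define s where "s = (t + sum_list ks) mod n"
  have ne: "ks \<noteq> []" using v by auto
  have hdn: "hd ks < n" using v ne by (cases ks) auto
  have lastn: "last ks < n" using v ne last_in_set by blast
  have sum_ht: "sum_list ks = hd ks + sum_list (tl ks)" using ne by (cases ks) auto
  have sum_bl: "sum_list ks = last ks + sum_list (butlast ks)"
    using ne by (metis append_butlast_last_id sum_list_append sum_list.Cons sum_list.Nil add.commute add_0_right)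
  have t1: "gmult n (sig n (hd ks)) (f (tl ks)) s = coord n f t (tl ks)"
    unfolding s_def sum_ht by (rule gmult_sig_coord[OF t hdn])
  have t3: "gmult n (f (butlast ks)) (sig n (last ks)) s = coord n f t (butlast ks)"
    unfolding s_def sum_bl by (rule gmult_coord_sig[OF t lastn])
  have t2: "f (take (i - Suc 0) ks @ (ks ! (i - Suc 0) + ks ! i) mod n # drop (Suc i) ks) s = coord n f t (merge_at n ks i)"
    if i1: "Suc 0 \<le> i" and i2: "i \<le> m" for i
  proof -
    have "(t + sum_list (merge_at n ks i)) mod n = s"
      unfolding s_def using sum_list_merge_at_mod[of i ks n] i1 i2 v by (metis One_nat_def le_imp_less_Suc mod_add_right_eq)
    then show ?thesis by (simp add: coord_def merge_at_def)
  qed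
  have sm: "(\<Sum>i\<in>{1..m}. (-1) ^ i * f (take (i - 1) ks @ [(ks ! (i - 1) + ks ! i) mod n] @ drop (i + 1) ks) s)
      = (\<Sum>i\<in>{1..m}. (-1) ^ i * coord n f t (merge_at n ks i))"
  proof (rule sum.cong[OF refl])
    fix i assume "i \<in> {1..m}"
    then show "(-1) ^ i * f (take (i - 1) ks @ [(ks ! (i - 1) + ks ! i) mod n] @ drop (i + 1) ks) s
      = (-1) ^ i * coord n f t (merge_at n ks i)" using t2[of i] by simp
  qed
  have "coord n (hdiff n m f) t ks = hdiff n m f ks s" by (simp add: coord_def s_def)
  also have "\<dots> = gmult n (sig n (hd ks)) (f (tl ks)) s
      + (\<Sum>i\<in>{1..m}. (-1) ^ i * f (take (i - 1) ks @ [(ks ! (i - 1) + ks ! i) mod n] @ drop (i + 1) ks) s)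
      + (-1) ^ Suc m * gmult n (f (butlast ks)) (sig n (last ks)) s"
    using True by (simp add: hdiff_def)
  also have "\<dots> = coord n f t (tl ks) + (\<Sum>i\<in>{1..m}. (-1) ^ i * coord n f t (merge_at n ks i))
      + (-1) ^ Suc m * coord n f t (butlast ks)"
    unfolding t1 t3 sm ..
  also have "\<dots> = cdiff n m (coord n f t) ks" using True by (simp add: cdiff_def cdiff_expr_def)
  finally show ?thesis .
qed

lemma hdiff_supported_below:
  assumes f: "f \<in> cochains n m"
  shows "supported_below n (hdiff n m f)"
  unfolding supported_below_def hdiff_def using cochainsD(1)[OF f] by (auto simp: gmult_def)

lemma zero_supported_below: "supported_below n (\<lambda>_ _. 0)"
  by (simp add: supported_below_def)

lemma cocycles_iff_coords:
  assumes n: "0 < n"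
  shows "f \<in> cocycles n m \<longleftrightarrow> f \<in> cochains n m \<and> (\<forall>t<n. \<forall>ks. cdiff n m (coord n f t) ks = 0)"
proof
  assume "f \<in> cocycles n m"
  then have f: "f \<in> cochains n m" and h: "hdiff n m f = (\<lambda>_ _. 0)" by (auto simp: cocycles_def)
  have "cdiff n m (coord n f t) ks = 0" if "t < n" for t ks
    using coord_hdiff[OF f that, of ks] h by (simp add: coord_def)
  then show "f \<in> cochains n m \<and> (\<forall>t<n. \<forall>ks. cdiff n m (coord n f t) ks = 0)" using f by blast
next
  assume a: "f \<in> cochains n m \<and> (\<forall>t<n. \<forall>ks. cdiff n m (coord n f t) ks = 0)"
  have "hdiff n m f = (\<lambda>_ _. 0)"
  proof (rule coord_eqI[OF n hdiff_supported_below zero_supported_below])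
    show "f \<in> cochains n m" using a by blast
    fix t ks assume "t < n"
    then show "coord n (hdiff n m f) t ks = coord n (\<lambda>_ _. 0) t ks"
      using coord_hdiff[of f n m t ks] a by (simp add: coord_def)
  qed
  then show "f \<in> cocycles n m" using a by (simp add: cocycles_def)
qed

lemma coboundaries_iff_coords:
  assumes n: "0 < n" and f: "supported_below n f"
  shows "f \<in> coboundaries n m \<longleftrightarrow> (\<forall>t<n. cyc_coboundary n m (coord n f t))"
proof (cases m)
  case 0
  have "f = (\<lambda>_ _. 0) \<longleftrightarrow> (\<forall>t<n. coord n f t = (\<lambda>_. 0))"
    using coord_eqI[OF n f zero_supported_below] by (auto simp: coord_def fun_eq_iff)
  then show ?thesis using 0 by (simp add: coboundaries_def)
next
  case (Suc m')
  show ?thesis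
  proof
    assume "f \<in> coboundaries n m"
    then obtain g where g: "g \<in> cochains n m'" "f = hdiff n m' g"
      using Suc by (auto simp: coboundaries_def)
    then have "coord n f t = cdiff n m' (coord n g t)" if "t < n" for t
      unfolding g(2) using coord_hdiff[OF g(1) that] by (simp add: fun_eq_iff)
    then show "\<forall>t<n. cyc_coboundary n m (coord n f t)"
      using Suc coord_cyc_cochains[OF g(1)] by auto
  next
    assume c: "\<forall>t<n. cyc_coboundary n m (coord n f t)"
    define \<Theta> where "\<Theta> t = (SOME \<theta>. \<theta> \<in> cyc_cochains n m' \<and> coord n f t = cdiff n m' \<theta>)" for t
    have \<Theta>: "\<Theta> t \<in> cyc_cochains n m' \<and> coord n f t = cdiff n m' (\<Theta> t)" if "t < n" for t
    proof -
      have "\<exists>\<theta>. \<theta> \<in> cyc_cochains n m' \<and> coord n f t = cdiff n m' \<theta>"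
        using c that Suc by auto
      then show ?thesis unfolding \<Theta>_def by (rule someI_ex)
    qed
    have g: "of_coords n \<Theta> \<in> cochains n m'"
      by (rule of_coords_cochains) (use \<Theta> in blast)
    have "hdiff n m' (of_coords n \<Theta>) = f"
    proof (rule coord_eqI[OF n hdiff_supported_below[OF g] f])
      fix t ks
      assume t: "t < n"
      have "coord n (of_coords n \<Theta>) t = \<Theta> t"
        by (rule ext) (rule coord_of_coords[OF t])
      then show "coord n (hdiff n m' (of_coords n \<Theta>)) t ks = coord n f t ks"
        using coord_hdiff[OF g t] \<Theta>[OF t] by simp
    qed
    then show "f \<in> coboundaries n m"
      using Suc g by (auto simp: coboundaries_def)
  qed
qed

lemma gmult_scale_r: "gmult n g (\<lambda>t. c * h t) = (\<lambda>t. c * gmult n g h t)"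
  by (rule ext) (simp add: gmult_def sum_distrib_left algebra_simps if_distrib cong: if_cong)

lemma xpow_eq: "0 < n \<Longrightarrow> xpow n i = (\<lambda>ks. if ks = [] then sig n i else (\<lambda>_. 0))"
proof (induction i)
  case 0 then show ?case by (simp add: unit_cochain_def)
next
  case (Suc i)
  show ?case
    by (rule ext) (simp add: Suc cup_def x_cochain_def gmult_sig_sig[OF Suc.prems])
qed

lemma z_cochain_Cons2:
  assumes "0 < n"
  shows "z_cochain n [a, b] = (\<lambda>s. (if valid_idx n 2 [a, b] \<and> n \<le> a + b then -1 else 0) * sig n (a + b) s)"
proof -
  have "(a + b - n) mod n = (a + b) mod n" if "n \<le> a + b"
    using that by (simp add: le_mod_geq)
  then show ?thesis by (auto simp: fun_eq_iff z_cochain_def sig_def)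
qed

lemma u_pow_Suc_Cons2:
  "u_pow n (Suc k) (a # b # r) = (if valid_idx n 2 [a, b] \<and> n \<le> a + b then u_pow n k r else 0)"
proof (cases "valid_idx n (2 * k) r")
  case False
  then show ?thesis
    using cyc_cochainsD[OF u_pow_cyc_cochains False] by (auto simp: u_cup_def valid_idx_def)
qed (auto simp: u_cup_def valid_idx_def)

text \<open>In coordinates \<open>z\<close> is \<open>-u\<close>.\<close>

lemma zpow_eq:
  assumes n: "0 < n"
  shows "zpow n k = (\<lambda>ks s. (-1) ^ k * u_pow n k ks * (sig n (sum_list ks) s :: 'r::comm_ring_1))"
proof (induction k)
  case 0
  show ?case by (simp add: fun_eq_iff unit_cochain_def)
next
  case (Suc k)
  show ?case
  proof (intro ext)
    fix ks s
    show "zpow n (Suc k) ks s = (-1) ^ Suc k * u_pow n (Suc k) ks * (sig n (sum_list ks) s :: 'r)"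
    proof (cases "length ks = Suc (Suc (2 * k))")
      case False
      then have "\<not> valid_idx n (Suc (Suc (2 * k))) ks" by (auto simp: valid_idx_def)
      then show ?thesis using False by (simp add: cup_def u_cup_def)
    next
      case True
      then obtain a b r where ks: "ks = a # b # r" and r: "length r = 2 * k"
        by (metis length_Suc_conv)
      have "zpow n (Suc k) ks = (gmult n (z_cochain n [a, b]) (zpow n k r) :: nat \<Rightarrow> 'r)"
        using ks r by (simp add: cup_def)
      also have "\<dots> = (\<lambda>s. ((if valid_idx n 2 [a, b] \<and> n \<le> a + b then -1 else 0) * ((-1) ^ k * u_pow n k r))
          * sig n (a + b + sum_list r) s)"
      proof -
        have zpow_r: "zpow n k r = (\<lambda>s. ((-1) ^ k * u_pow n k r) * (sig n (sum_list r) s :: 'r))"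
          by (simp add: Suc.IH)
        show ?thesis
          unfolding zpow_r z_cochain_Cons2[OF n] gmult_scale_l gmult_scale_r gmult_sig_sig[OF n]
          by (simp only: mult.assoc)
      qed
      finally show ?thesis
        using ks by (simp add: u_pow_Suc_Cons2 add.assoc del: u_pow.simps)
    qed
  qed
qed

lemma monom_eq:
  assumes n: "0 < n"
  shows "monom n i k = (\<lambda>ks s. (-1) ^ k * u_pow n k ks * (sig n (i + sum_list ks) s :: 'r::comm_ring_1))"
proof (rule ext)+
  fix ks s
  show "monom n i k ks s = (-1) ^ k * u_pow n k ks * (sig n (i + sum_list ks) s :: 'r)"
  proof (cases "length ks = 2 * k")
    case False
    then have "\<not> valid_idx n (2 * k) ks" by (auto simp: valid_idx_def)
    then have "u_pow n k ks = (0::'r)" by (rule cyc_cochainsD[OF u_pow_cyc_cochains])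
    then show ?thesis using False by (simp add: monom_def cup_def)
  next
    case True
    have "monom n i k ks = gmult n (sig n i) (\<lambda>s. (-1) ^ k * u_pow n k ks * (sig n (sum_list ks) s :: 'r))"
      using True by (simp add: monom_def cup_def xpow_eq[OF n] zpow_eq[OF n])
    also have "\<dots> = (\<lambda>s. (-1) ^ k * u_pow n k ks * sig n (i + sum_list ks) s)"
      unfolding gmult_scale_r gmult_sig_sig[OF n] ..
    finally show ?thesis by simp
  qed
qed

lemma coord_monom:
  assumes t: "t < n"
  shows "coord n (monom n i k) t ks = (if t = i mod n then (-1) ^ k * u_pow n k ks else (0::'r::comm_ring_1))"
proof -
  have n: "0 < n" using t by simp
  have "((t + sum_list ks) mod n = (i + sum_list ks) mod n) = (t = i mod n)"
  proof
    assume "(t + sum_list ks) mod n = (i + sum_list ks) mod n"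
    then have "t mod n = i mod n" by (rule mod_add_right_cancel)
    then show "t = i mod n" using t by simp
  next
    assume "t = i mod n"
    then show "(t + sum_list ks) mod n = (i + sum_list ks) mod n" by (simp add: mod_add_left_eq)
  qed
  then show ?thesis unfolding coord_def monom_eq[OF n] by (auto simp: sig_def)
qed

lemma monom_cochains: "0 < n \<Longrightarrow> (monom n i k :: nat list \<Rightarrow> nat \<Rightarrow> 'r::comm_ring_1) \<in> cochains n (2 * k)"
proof -
  assume n: "0 < n"
  have a: "(sig n j s :: 'r) = 0" if "n \<le> s" for j s
    using that n by (auto simp: sig_def) (metis mod_less_divisor not_le)
  have b: "u_pow n k ks = (0::'r)" if "\<not> valid_idx n (2 * k) ks" for ks
    using that by (rule cyc_cochainsD[OF u_pow_cyc_cochains])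
  show ?thesis unfolding cochains_def gring_def monom_eq[OF n] using a b by auto
qed

lemma monom_supported_below: "0 < n \<Longrightarrow> supported_below n (monom n i k :: nat list \<Rightarrow> nat \<Rightarrow> 'r::comm_ring_1)"
  by (rule cochains_supported_below[OF monom_cochains])

lemma lincomb_supported_below:
  assumes n: "0 < n" shows "supported_below n (lincomb n k (c :: nat \<Rightarrow> 'r::comm_ring_1))"
proof -
  have "(monom n i k ks s :: 'r) = 0" if "n \<le> s" for i ks s
    using monom_supported_below[OF n, of i k, where 'r='r] that by (simp add: supported_below_def)
  then show ?thesis by (simp add: supported_below_def lincomb_def)
qed

lemma coord_lincomb:
  assumes t: "t < n"
  shows "coord n (lincomb n k c) t ks = c t * ((-1) ^ k * u_pow n k ks)"
proof -
  have "coord n (lincomb n k c) t ks = (\<Sum>i<n. c i * coord n (monom n i k) t ks)"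
    by (simp add: coord_def lincomb_def)
  also have "\<dots> = (\<Sum>i<n. if i = t then c i * ((-1) ^ k * u_pow n k ks) else 0)"
    by (rule sum.cong[OF refl]) (use t in \<open>auto simp: coord_monom\<close>)
  also have "\<dots> = c t * ((-1) ^ k * u_pow n k ks)" using t by (simp add: sum.delta')
  finally show ?thesis .
qed

lemma cminus_supported_below: "supported_below n f \<Longrightarrow> supported_below n g \<Longrightarrow> supported_below n (cminus f g)"
  by (simp add: supported_below_def cminus_def)

lemma coord_cminus: "coord n (cminus f g) t ks = coord n f t ks - coord n g t ks"
  by (simp add: coord_def cminus_def)

lemma sum_list_rotate: "sum_list (rotate i xs) = (sum_list xs :: nat)"
  by (simp add: rotate_drop_take add.commute flip: sum_list_append)
    (metis append_take_drop_id sum_list_append add.commute)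

lemma drop_append_take_eq_rotate:
  assumes "length ks = m" "1 \<le> i" "i \<le> Suc m"
  shows "drop (i - 1) ks @ [g] @ take (i - 1) ks = rotate i (g # ks)"
proof (cases "i = Suc m")
  case True
  then show ?thesis using assms by (subst rotate_id) simp_all
next
  case False
  then have "i mod Suc m = i" using assms by simp
  then show ?thesis using assms by (cases i) (auto simp: rotate_drop_take)
qed

lemma minus_mod_eq_iff: "j < n \<Longrightarrow> s < n \<Longrightarrow> (s = (n - j) mod n) = (j = (n - s) mod (n::nat))"
  by (cases "j = 0"; cases "s = 0") auto

lemma cyc_norm_eq_sum_rotate_Suc:
  assumes "length y = Suc m"
  shows "cyc_norm F y = (\<Sum>i\<in>{1..Suc m}. (-1) ^ (i * m) * F (rotate i y))"
proof -
  define h where "h i = (-1) ^ (i * m) * F (rotate i y)" for i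
  have "rotate (Suc m) y = y"
    using assms by (intro rotate_id) simp
  then have "h (Suc m) = h 0"
    by (simp add: h_def minus_one_power_iff del: rotate_Suc)
  have "(\<Sum>i\<in>{1..Suc m}. h i) = (\<Sum>i<Suc m. h (Suc i))"
    by (rule sum.reindex_bij_witness[where i = Suc and j = "\<lambda>i. i - 1"]) auto
  also have "\<dots> = h 0 + (\<Sum>i<m. h (Suc i))"
    using \<open>h (Suc m) = h 0\<close> by simp
  also have "\<dots> = (\<Sum>i<Suc m. h i)"
    by (rule sum.lessThan_Suc_shift[symmetric])
  finally show ?thesis
    unfolding h_def cyc_norm_def using assms by simp
qed

lemma coord_bv_delta:
  assumes f: "f \<in> cochains n (Suc m)" and t: "t < n"
  shows "coord n (bv_delta n m f) t ks = cdelta n m t (coord n f t) ks"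
proof (cases "valid_idx n m ks")
  case False
  then show ?thesis by (simp add: coord_def bv_delta_def cdelta_def)
next
  case True
  note v = valid_idxD[OF True]
  have n: "0 < n" using t by simp
  define s where "s = (t + sum_list ks) mod n"
  have s: "s < n" using n by (simp add: s_def)
  define g0 where "g0 = compl_index n t ks"
  have g0: "g0 = (n - s) mod n" by (simp add: g0_def compl_index_def s_def)
  have g0n: "g0 < n" using n by (simp add: g0)
  define X where "X j = (\<Sum>i\<in>{1..Suc m}. (-1) ^ (i * m) * f (drop (i - 1) ks @ [j] @ take (i - 1) ks) 0)" for j
  have "coord n (bv_delta n m f) t ks = (\<Sum>j<n. \<Sum>i\<in>{1..Suc m}.
      (-1) ^ (i * m) * f (drop (i - 1) ks @ [j] @ take (i - 1) ks) 0 * sig n (n - j) s)"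
    using True by (simp add: coord_def bv_delta_def s_def)
  also have "\<dots> = (\<Sum>j<n. if j = g0 then X j else 0)"
  proof (rule sum.cong[OF refl])
    fix j assume j: "j \<in> {..<n}"
    have "sig n (n - j) s = (if j = g0 then 1 else (0::'a))"
      using minus_mod_eq_iff[of j n s] j s by (auto simp: sig_def g0)
    then show "(\<Sum>i\<in>{1..Suc m}. (-1) ^ (i * m) * f (drop (i - 1) ks @ [j] @ take (i - 1) ks) 0 * sig n (n - j) s)
        = (if j = g0 then X j else 0)"
      by (simp add: X_def sum_distrib_right)
  qed
  also have "\<dots> = X g0" using g0n by (simp add: sum.delta)
  also have "\<dots> = (\<Sum>i\<in>{1..Suc m}. (-1) ^ (i * m) * coord n f t (rotate i (g0 # ks)))"
    unfolding X_def
  proof (rule sum.cong[OF refl])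
    fix i assume i: "i \<in> {1..Suc m}"
    have L: "drop (i - 1) ks @ [g0] @ take (i - 1) ks = rotate i (g0 # ks)"
      by (rule drop_append_take_eq_rotate) (use v i in auto)
    have "(t + sum_list (rotate i (g0 # ks))) mod n = 0"
      using compl_index_sum[OF n, of t ks] unfolding sum_list_rotate g0_def by (simp add: add_ac)
    then show "(-1) ^ (i * m) * f (drop (i - 1) ks @ [g0] @ take (i - 1) ks) 0
        = (-1) ^ (i * m) * coord n f t (rotate i (g0 # ks))"
      unfolding L by (simp add: coord_def)
  qed
  also have "\<dots> = cyc_norm (coord n f t) (g0 # ks)"
    using v by (simp add: cyc_norm_eq_sum_rotate_Suc)
  also have "\<dots> = cdelta n m t (coord n f t) ks" using True by (simp add: cdelta_def g0_def)
  finally show ?thesis .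
qed

lemma bv_delta_supported_below:
  assumes n: "0 < n" shows "supported_below n (bv_delta n m f)"
proof -
  have "(sig n j s :: 'a::comm_ring_1) = 0" if "n \<le> s" for j s
    using that n by (auto simp: sig_def) (metis mod_less_divisor not_le)
  then show ?thesis by (simp add: supported_below_def bv_delta_def)
qed

lemma monom_cocycles:
  assumes n_pos: "0 < n"
  shows "(monom n i k :: nat list \<Rightarrow> nat \<Rightarrow> 'r::comm_ring_1) \<in> cocycles n (2 * k)"
proof -
  have "coord n (monom n i k :: nat list \<Rightarrow> nat \<Rightarrow> 'r) t
      = (\<lambda>ks. (if t = i mod n then (-1) ^ k else 0) * u_pow n k ks)" if "t < n" for t
    by (simp add: fun_eq_iff coord_monom[OF that])
  then show ?thesis
    using monom_cochains[OF n_pos] by (simp add: cocycles_iff_coords[OF n_pos] cdiff_scale cdiff_u_pow)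
qed

lemma odd_cocycles_coboundaries:
  fixes f :: "nat list \<Rightarrow> nat \<Rightarrow> 'r::idom"
  assumes n_pos: "0 < n" and n_nonzero: "of_nat n \<noteq> (0::'r)" and f: "f \<in> cocycles n (Suc (2 * k))"
  shows "f \<in> coboundaries n (Suc (2 * k))"
  using f odd_cocycle_coboundary[OF n_pos n_nonzero coord_cyc_cochains]
  by (auto simp: cocycles_iff_coords[OF n_pos] coboundaries_iff_coords[OF n_pos] cochains_supported_below)

lemma even_cocycles_lincomb:
  fixes f :: "nat list \<Rightarrow> nat \<Rightarrow> 'r::comm_ring_1"
  assumes n_pos: "0 < n" and f: "f \<in> cocycles n (2 * k)"
  shows "\<exists>c. cminus f (lincomb n k c) \<in> coboundaries n (2 * k)"
proof -
  have f': "f \<in> cochains n (2 * k)" "\<And>t ks. t < n \<Longrightarrow> cdiff n (2 * k) (coord n f t) ks = 0"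
    using f by (auto simp: cocycles_iff_coords[OF n_pos])
  have "\<exists>a. t < n \<longrightarrow> cyc_coboundary n (2 * k) (\<lambda>ks. coord n f t ks - a * u_pow n k ks)" for t
    using even_cocycle_u_pow[OF n_pos coord_cyc_cochains[OF f'(1)] f'(2)] by blast
  then obtain a where a: "\<forall>t. t < n \<longrightarrow> cyc_coboundary n (2 * k) (\<lambda>ks. coord n f t ks - a t * u_pow n k ks)"
    using choice by metis
  have "coord n (cminus f (lincomb n k (\<lambda>t. (-1) ^ k * a t))) t
      = (\<lambda>ks. coord n f t ks - ((-1) ^ k * ((-1) ^ k * a t)) * u_pow n k ks)" if "t < n" for t
    by (simp add: fun_eq_iff coord_cminus coord_lincomb[OF that] algebra_simps)
  moreover have "(-1) ^ k * ((-1) ^ k * x) = (x::'r)" for x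
    by (simp add: minus_one_power_iff)
  ultimately have coord_eq: "coord n (cminus f (lincomb n k (\<lambda>t. (-1) ^ k * a t))) t
      = (\<lambda>ks. coord n f t ks - a t * u_pow n k ks)" if "t < n" for t
    using that by simp
  have "supported_below n (cminus f (lincomb n k (\<lambda>t. (-1) ^ k * a t)))"
    by (rule cminus_supported_below[OF cochains_supported_below[OF f'(1)] lincomb_supported_below[OF n_pos]])
  then have "cminus f (lincomb n k (\<lambda>t. (-1) ^ k * a t)) \<in> coboundaries n (2 * k)"
    using a coord_eq by (simp add: coboundaries_iff_coords[OF n_pos])
  then show ?thesis by blast
qed

lemma lincomb_coboundaries_iff:
  fixes c :: "nat \<Rightarrow> 'r::comm_ring_1"
  assumes n_pos: "0 < n"
  shows "lincomb n k c \<in> coboundaries n (2 * k)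
    \<longleftrightarrow> (if k = 0 then (\<forall>i<n. c i = 0) else (\<forall>i<n. of_nat n dvd c i))"
proof -
  have "coord n (lincomb n k c) t = (\<lambda>ks. ((-1) ^ k * c t) * u_pow n k ks)" if "t < n" for t
    by (simp add: fun_eq_iff algebra_simps coord_lincomb[OF that])
  then have "lincomb n k c \<in> coboundaries n (2 * k)
      \<longleftrightarrow> (\<forall>t<n. if k = 0 then (-1) ^ k * c t = 0 else of_nat n dvd (-1) ^ k * c t)"
    by (simp add: coboundaries_iff_coords[OF n_pos lincomb_supported_below[OF n_pos]]
        cyc_coboundary_u_pow_iff[OF n_pos])
  also have "\<dots> \<longleftrightarrow> (if k = 0 then (\<forall>i<n. c i = 0) else (\<forall>i<n. of_nat n dvd c i))"
    by (cases "even k") simp_all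
  finally show ?thesis .
qed

lemma bv_delta_coboundaries:
  fixes f :: "nat list \<Rightarrow> nat \<Rightarrow> 'r::idom"
  assumes n_pos: "0 < n" and n_nonzero: "of_nat n \<noteq> (0::'r)" and f: "f \<in> cocycles n (Suc m)"
  shows "bv_delta n m f \<in> coboundaries n m"
proof -
  have f': "f \<in> cochains n (Suc m)" "\<And>t ks. t < n \<Longrightarrow> cdiff n (Suc m) (coord n f t) ks = 0"
    using f by (auto simp: cocycles_iff_coords[OF n_pos])
  have "coord n (bv_delta n m f) t = cdelta n m t (coord n f t)" if "t < n" for t
    using coord_bv_delta[OF f'(1) that] by (simp add: fun_eq_iff)
  then show ?thesis
    using cdelta_cocycle_coboundary[OF n_pos n_nonzero coord_cyc_cochains[OF f'(1)] f'(2)]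
    by (simp add: coboundaries_iff_coords[OF n_pos bv_delta_supported_below[OF n_pos]])
qed

theorem mainTheorem1:
  fixes n :: nat
  assumes "n \<ge> 1"
    and "\<not> CHAR('r::idom) dvd n"
  shows
    \<comment> \<open>the generators and their monomials are cocycles\<close>
    "(\<forall>i k. (monom n i k :: nat list \<Rightarrow> nat \<Rightarrow> 'r) \<in> cocycles n (2 * k))
     \<comment> \<open>surjectivity of R[x,z] -> HH^*: HH^odd = 0, HH^(2k) spanned by x^i z^k, i<n\<close>
     \<and> (\<forall>k. \<forall>f \<in> (cocycles n (2 * k + 1) :: (nat list \<Rightarrow> nat \<Rightarrow> 'r) set).
           f \<in> coboundaries n (2 * k + 1))
     \<and> (\<forall>k. \<forall>f \<in> (cocycles n (2 * k) :: (nat list \<Rightarrow> nat \<Rightarrow> 'r) set).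
           \<exists>c. cminus f (lincomb n k c) \<in> coboundaries n (2 * k))
     \<comment> \<open>kernel is exactly (x^n - 1, n z)\<close>
     \<and> (\<forall>k (c :: nat \<Rightarrow> 'r). lincomb n k c \<in> coboundaries n (2 * k) \<longleftrightarrow>
           (if k = 0 then (\<forall>i<n. c i = 0) else (\<forall>i<n. of_nat n dvd c i)))
     \<comment> \<open>Delta vanishes on HH^*\<close>
     \<and> (\<forall>m. \<forall>f \<in> (cocycles n (Suc m) :: (nat list \<Rightarrow> nat \<Rightarrow> 'r) set).
           bv_delta n m f \<in> coboundaries n m)"
proof -
  have n_pos: "0 < n" using assms(1) by simp
  have n_nonzero: "of_nat n \<noteq> (0::'r)"
    using assms(2) by (simp add: of_nat_eq_0_iff_char_dvd)
  show ?thesis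
  proof (intro conjI allI ballI)
    fix i k
    show "(monom n i k :: nat list \<Rightarrow> nat \<Rightarrow> 'r) \<in> cocycles n (2 * k)"
      by (rule monom_cocycles[OF n_pos])
  next
    fix k and f :: "nat list \<Rightarrow> nat \<Rightarrow> 'r"
    assume "f \<in> cocycles n (2 * k + 1)"
    then show "f \<in> coboundaries n (2 * k + 1)"
      using odd_cocycles_coboundaries[OF n_pos n_nonzero] by simp
  next
    fix k and f :: "nat list \<Rightarrow> nat \<Rightarrow> 'r"
    assume "f \<in> cocycles n (2 * k)"
    then show "\<exists>c. cminus f (lincomb n k c) \<in> coboundaries n (2 * k)"
      by (rule even_cocycles_lincomb[OF n_pos])
  next
    fix k and c :: "nat \<Rightarrow> 'r"
    show "lincomb n k c \<in> coboundaries n (2 * k)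
      \<longleftrightarrow> (if k = 0 then (\<forall>i<n. c i = 0) else (\<forall>i<n. of_nat n dvd c i))"
      by (rule lincomb_coboundaries_iff[OF n_pos])
  next
    fix m and f :: "nat list \<Rightarrow> nat \<Rightarrow> 'r"
    assume "f \<in> cocycles n (Suc m)"
    then show "bv_delta n m f \<in> coboundaries n m"
      by (rule bv_delta_coboundaries[OF n_pos n_nonzero])
  qed
qed

end
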